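(* Let $(G_k,y)$ be a mass-action system whose edge set is partitioned as $E=E^1\dot\cup\cdots\dot\cup E^\ell$ into $\ell$ connected, independent subnetworks ($S=S_1\oplus\cdots\oplus S_\ell$), and assume: (I) $\ker\Gamma_k\cap\mathbb{R}^{V^\sqcup_s}_{>0}\neq\emptyset$; (IIa) $K=L$, or (IIb) $L=S$; (III) for every $j=1,\dots,\ell$: $d_j\le1$ and $K_j=L_j$; and if $d_j=1$, then $\sum_{i'=1}^{i}\tilde b^j_{i'}\ge0$ for all $i=1,\dots,\omega_j-1$ (or $\le0$ for all such $i$) and $\tilde b^j_1\cdot\tilde b^j_{\omega_j}<0$. Then, under (IIa), for every $x'\in\mathbb{R}^n_{>0}$ there is exactly one positive equilibrium in the kinetic compatibility class $(x'+K)\cap\mathbb{R}^n_{>0}$; under (IIb), for every $x'\in\mathbb{R}^n_{>0}$ there is exactly one positive equilibrium in the stoichiometric compatibility class $(x'+S)\cap\mathbb{R}^n_{>0}$.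
   Context: A reaction network $(G,y)$: finite simple digraph $G=(V,E)$ and map $y:V\to\mathbb{R}^n$; rate constants $k\in\mathbb{R}^E_{>0}$ give a mass-action system with ODE $\dot x=\sum_{(i\to i')\in E}k_{i\to i'}\,x^{y(i)}(y(i')-y(i))$ on $\mathbb{R}^n_{>0}$, where $x^{y}=\prod_r x_r^{y_r}$. A positive equilibrium is $x\in\mathbb{R}^n_{>0}$ where the right-hand side vanishes. $V_s$: source vertices. $Y\in\mathbb{R}^{n\times V}$ has columns $y(i)$; $R_k\in\mathbb{R}^{V\times V_s}$ is the rectangular Laplacian ($(R_k)_{i,j}=k_{j\to i}$ if $(j\to i)\in E$, $(R_k)_{j,j}=-\sum_{(j\to i')\in E}k_{j\to i'}$, else $0$); $S=\operatorname{span}\{y(i')-y(i):(i\to i')\in E\}$ and $K=\operatorname{im}(YR_k)$. Subnetworks: $G^j=(V^j,E^j)$ with $V^j$ the vertices incident to $E^j$, source vertices $V^j_s$, $Y^j$, $Y^j_s$ the complex and source-complex matrices, $R^j_k\in\mathbb{R}^{V^j\times V^j_s}$ the rectangular Laplacian of $G^j$ with $k$ restricted to $E^j$, $S_j=\operatorname{span}\{y(i')-y(i):(i\to i')\in E^j\}$, $K_j=\operatorname{im}(Y^jR^j_k)$, $L_j=\operatorname{span}\{y(i)-y(i'):i,i'\in V^j_s\}$, $L=L_1+\cdots+L_\ell$. Connected means each $G^j$ is weakly connected; independent means $S=S_1\oplus\cdots\oplus S_\ell$. $V^\sqcup_s=V^1_s\sqcup\cdots\sqcup V^\ell_s$ (disjoint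 union), $\Gamma^j_k=Y^jR^j_k$, $\Gamma_k=(\Gamma^1_k\ \cdots\ \Gamma^\ell_k)\in\mathbb{R}^{n\times V^\sqcup_s}$. $d_j=\dim\ker\begin{pmatrix}Y^j_s\\1^{\mathsf T}_{V^j_s}\end{pmatrix}$. For $j$ with $d_j=1$ (and $K_j=L_j$), the set $P_j=\{\xi\in\ker\Gamma^j_k\cap\mathbb{R}^{V^j_s}_{>0}:\sum_i\xi_i=1\}$ is one-dimensional; let $y^{j,1},y^{j,2}$ be the endpoints of its closure $\{\xi\in\ker\Gamma^j_k\cap\mathbb{R}^{V^j_s}_{\ge0}:\sum_i\xi_i=1\}$, $q^j=(y^{j,1}-y^{j,2})\circ(y^{j,1}+y^{j,2})^{-1}$ (componentwise), with $V^j_s$ ordered so that $1=q^j_1\ge\cdots\ge q^j_{|V^j_s|}=-1$; let $I^j_1,\dots,I^j_{\omega_j}$ be the classes of equal consecutive components of $q^j$ (in decreasing order of the common value); let $b^j\in\mathbb{R}^{V^j_s}$ span $\ker\begin{pmatrix}Y^j_s\\1^{\mathsf T}_{V^j_s}\end{pmatrix}$ and $\tilde b^j_i=\sum_{i'\in I^j_i}b^j_{i'}$. *)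

theory Defs
  imports "HOL-Analysis.Analysis"
begin

text \<open>Vectors in R^V (or R^{V_s}) are represented as real^'v, with entries outside the
  relevant index set ignored or required to vanish.\<close>

definition simple_digraph :: "'v set \<Rightarrow> ('v \<times> 'v) set \<Rightarrow> bool" where
  "simple_digraph V E \<longleftrightarrow> E \<subseteq> V \<times> V \<and> (\<forall>(i, i') \<in> E. i \<noteq> i')"

definition sources :: "('v \<times> 'v) set \<Rightarrow> 'v set" where
  "sources E = fst ` E"

definition verts :: "('v \<times> 'v) set \<Rightarrow> 'v set" where
  "verts E = fst ` E \<union> snd ` E"

definition weakly_connected :: "('v \<times> 'v) set \<Rightarrow> bool" where
  "weakly_connected E \<longleftrightarrow> (\<forall>a \<in> verts E. \<forall>b \<in> verts E. (a, b) \<in> (E \<union> E\<inverse>)\<^sup>*)"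

definition monom :: "real^'n \<Rightarrow> real^'n \<Rightarrow> real" where
  "monom x v = (\<Prod>r\<in>UNIV. (x $ r) powr (v $ r))"

definition ma_rhs :: "('v \<times> 'v) set \<Rightarrow> ('v \<times> 'v \<Rightarrow> real) \<Rightarrow> ('v \<Rightarrow> real^'n) \<Rightarrow> real^'n \<Rightarrow> real^'n" where
  "ma_rhs E k y x = (\<Sum>(i, i') \<in> E. (k (i, i') * monom x (y i)) *\<^sub>R (y i' - y i))"

definition positive_vec :: "real^'n \<Rightarrow> bool" where
  "positive_vec x \<longleftrightarrow> (\<forall>r. x $ r > 0)"

definition pos_equilibrium :: "('v \<times> 'v) set \<Rightarrow> ('v \<times> 'v \<Rightarrow> real) \<Rightarrow> ('v \<Rightarrow> real^'n) \<Rightarrow> real^'n \<Rightarrow> bool" where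
  "pos_equilibrium E k y x \<longleftrightarrow> positive_vec x \<and> ma_rhs E k y x = 0"

text \<open>rectangular Laplacian: entry (i,j) for i a vertex, j a source vertex\<close>
definition lap :: "('v::finite \<times> 'v) set \<Rightarrow> ('v \<times> 'v \<Rightarrow> real) \<Rightarrow> 'v \<Rightarrow> 'v \<Rightarrow> real" where
  "lap E k i j = (if (j, i) \<in> E then k (j, i)
                  else if i = j then - (\<Sum>i' \<in> {i'. (j, i') \<in> E}. k (j, i'))
                  else 0)"

text \<open>the matrix Y R_k applied to a vector xi in R^{V_s} (V the vertex set)\<close>
definition gam :: "'v::finite set \<Rightarrow> ('v \<times> 'v) set \<Rightarrow> ('v \<times> 'v \<Rightarrow> real) \<Rightarrow> ('v \<Rightarrow> real^'n) \<Rightarrow> real^'v \<Rightarrow> real^'n" where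
  "gam V E k y \<xi> = (\<Sum>i \<in> V. (\<Sum>j \<in> sources E. lap E k i j * \<xi> $ j) *\<^sub>R y i)"

definition kin_space :: "'v::finite set \<Rightarrow> ('v \<times> 'v) set \<Rightarrow> ('v \<times> 'v \<Rightarrow> real) \<Rightarrow> ('v \<Rightarrow> real^'n) \<Rightarrow> (real^'n) set" where
  "kin_space V E k y = range (gam V E k y)"

definition stoich_space :: "('v \<Rightarrow> real^'n) \<Rightarrow> ('v \<times> 'v) set \<Rightarrow> (real^'n) set" where
  "stoich_space y E = span {y i' - y i | i i'. (i, i') \<in> E}"

definition L_space :: "('v \<Rightarrow> real^'n) \<Rightarrow> ('v \<times> 'v) set \<Rightarrow> (real^'n) set" where
  "L_space y E = span {y i - y i' | i i'. i \<in> sources E \<and> i' \<in> sources E}"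

definition independent_subnets :: "nat \<Rightarrow> (nat \<Rightarrow> (real^'n) set) \<Rightarrow> (real^'n) set \<Rightarrow> bool" where
  "independent_subnets l Ss S \<longleftrightarrow>
     S = {(\<Sum>j<l. v j) | v. \<forall>j<l. v j \<in> Ss j} \<and>
     (\<forall>v. (\<forall>j<l. v j \<in> Ss j) \<and> (\<Sum>j<l. v j) = 0 \<longrightarrow> (\<forall>j<l. v j = 0))"

definition defic_kernel :: "('v \<Rightarrow> real^'n) \<Rightarrow> ('v::finite \<times> 'v) set \<Rightarrow> (real^'v) set" where
  "defic_kernel y E = {\<xi>. (\<forall>i. i \<notin> sources E \<longrightarrow> \<xi> $ i = 0) \<and>
       (\<Sum>i \<in> sources E. (\<xi> $ i) *\<^sub>R y i) = 0 \<and> (\<Sum>i \<in> sources E. \<xi> $ i) = 0}"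

definition defic :: "('v \<Rightarrow> real^'n) \<Rightarrow> ('v::finite \<times> 'v) set \<Rightarrow> nat" where
  "defic y E = dim (defic_kernel y E)"

definition Pclos :: "('v::finite \<times> 'v) set \<Rightarrow> ('v \<times> 'v \<Rightarrow> real) \<Rightarrow> ('v \<Rightarrow> real^'n) \<Rightarrow> (real^'v) set" where
  "Pclos E k y = {\<xi>. (\<forall>i. i \<notin> sources E \<longrightarrow> \<xi> $ i = 0) \<and> (\<forall>i \<in> sources E. \<xi> $ i \<ge> 0) \<and>
       gam (verts E) E k y \<xi> = 0 \<and> (\<Sum>i \<in> sources E. \<xi> $ i) = 1}"

text \<open>The sign condition of (III) for a subnetwork with d_j = 1.  e1, e2 are the endpoints of
  the segment Pclos, q the componentwise quotient, the classes I_1..I_omega are the level sets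
  of q on V^j_s in decreasing order of the value, b spans the kernel, tb m = tilde b_m.\<close>
definition sign_cond :: "('v::finite \<times> 'v) set \<Rightarrow> ('v \<times> 'v \<Rightarrow> real) \<Rightarrow> ('v \<Rightarrow> real^'n) \<Rightarrow> bool" where
  "sign_cond E k y \<longleftrightarrow>
    (\<exists>e1 e2 b. Pclos E k y = closed_segment e1 e2 \<and> e1 \<noteq> e2 \<and>
       b \<noteq> 0 \<and> defic_kernel y E = span {b} \<and>
       (let q = (\<lambda>i. (e1 $ i - e2 $ i) / (e1 $ i + e2 $ i));
            cs = rev (sorted_list_of_set (q ` sources E));
            \<omega> = length cs;
            tb = (\<lambda>m. \<Sum>i \<in> {i \<in> sources E. q i = cs ! (m - 1)}. b $ i)
        in ((\<forall>i \<in> {1..<\<omega>}. (\<Sum>m = 1..i. tb m) \<ge> 0) \<or> (\<forall>i \<in> {1..<\<omega>}. (\<Sum>m = 1..i. tb m) \<le> 0))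
           \<and> tb 1 * tb \<omega> < 0))"

end

theory Submission
  imports Defs
begin

text \<open>Writing \<open>\<Gamma>\<^sub>k\<close> edge by edge, \<open>x\<close> is an equilibrium iff its vector of monomials \<open>x\<^sup>y\<close> lies in
  \<open>ker \<Gamma>\<^sub>k\<close>, and by independence of the subnetworks this splits into one kernel condition per
  subnetwork. On each subnetwork the positive kernel elements that are \<open>ln\<close>-orthogonal to the
  deficiency kernel form a single ray: for deficiency zero by rank-nullity, for deficiency one because
  on the segment \<open>P\<^sub>j\<close> this orthogonality reads \<open>H u = c\<close> for a function \<open>H\<close> which, after summation
  by parts, the sign condition (III) makes strictly increasing from \<open>-\<infinity>\<close> to \<open>\<infinity>\<close>. Monomial vectors
  are automatically \<open>ln\<close>-orthogonal to the deficiency kernel, so the positive equilibria are the \<open>x\<close>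
  whose logarithm reproduces the logarithmic differences of these rays. These linear equations are
  solvable, hence \<open>ln x\<close> ranges over a translate of \<open>L\<^sup>\<bottom>\<close>, and Birch's theorem yields exactly one
  equilibrium in each class \<open>x' + L\<close>; under (IIa) or (IIb), \<open>L\<close> is \<open>K\<close> or \<open>S\<close>.\<close>

section \<open>Mass-action systems in edge form\<close>

definition gamma_edges :: "('v::finite \<times> 'v) set \<Rightarrow> ('v \<times> 'v \<Rightarrow> real) \<Rightarrow> ('v \<Rightarrow> real^'n) \<Rightarrow> real^'v \<Rightarrow> real^'n" where
  "gamma_edges E k y \<xi> = (\<Sum>e\<in>E. (k e * \<xi> $ fst e) *\<^sub>R (y (snd e) - y (fst e)))"

definition monomials :: "('v::finite \<Rightarrow> real^'n) \<Rightarrow> real^'n \<Rightarrow> real^'v" where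
  "monomials y x = (\<chi> i. monom x (y i))"

definition ln_vec :: "real^'n \<Rightarrow> real^'n" where
  "ln_vec x = (\<chi> r. ln (x $ r))"

lemma sum_lap_scaleR:
  fixes E :: "('v::finite \<times> 'v) set" and y :: "'v \<Rightarrow> real^'n"
  assumes j: "j \<in> sources E" and V: "verts E \<subseteq> V" and loopless: "\<forall>(i, i')\<in>E. i \<noteq> i'"
  shows "(\<Sum>i\<in>V. lap E k i j *\<^sub>R y i) = (\<Sum>i\<in>{i. (j, i) \<in> E}. k (j, i) *\<^sub>R (y i - y j))"
proof -
  let ?A = "{i. (j, i) \<in> E}"
  have jV: "j \<in> V" and AV: "?A \<subseteq> V" using j V unfolding sources_def verts_def by force+
  have "j \<notin> ?A" using loopless by auto
  then have "(\<Sum>i\<in>V. lap E k i j *\<^sub>R y i)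
      = (\<Sum>i\<in>V. if i \<in> ?A then k (j, i) *\<^sub>R y i else 0) + (\<Sum>i\<in>V. if i = j then (- (\<Sum>i'\<in>?A. k (j, i'))) *\<^sub>R y j else 0)"
    unfolding sum.distrib[symmetric] by (intro sum.cong) (auto simp: lap_def)
  also have "\<dots> = (\<Sum>i\<in>?A. k (j, i) *\<^sub>R y i) - (\<Sum>i'\<in>?A. k (j, i')) *\<^sub>R y j"
    using AV jV by (simp add: sum.If_cases Int_absorb1)
  also have "\<dots> = (\<Sum>i\<in>?A. k (j, i) *\<^sub>R (y i - y j))"
    by (simp add: scaleR_diff_right sum_subtractf scaleR_sum_left)
  finally show ?thesis .
qed

lemma gam_eq_gamma_edges:
  fixes E :: "('v::finite \<times> 'v) set" and y :: "'v \<Rightarrow> real^'n"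
  assumes V: "verts E \<subseteq> V" and loopless: "\<forall>(i, i')\<in>E. i \<noteq> i'"
  shows "gam V E k y = gamma_edges E k y"
proof
  fix \<xi>
  have "gam V E k y \<xi> = (\<Sum>j\<in>sources E. \<xi> $ j *\<^sub>R (\<Sum>i\<in>V. lap E k i j *\<^sub>R y i))"
    unfolding gam_def scaleR_sum_left scaleR_sum_right by (subst sum.swap) (simp add: mult.commute)
  also have "\<dots> = (\<Sum>j\<in>sources E. \<Sum>i\<in>{i. (j, i) \<in> E}. (k (j, i) * \<xi> $ j) *\<^sub>R (y i - y j))"
    by (intro sum.cong refl) (simp add: sum_lap_scaleR[OF _ V loopless] scaleR_sum_right mult.commute)
  also have "\<dots> = (\<Sum>(j, i)\<in>Sigma (sources E) (\<lambda>j. {i. (j, i) \<in> E}). (k (j, i) * \<xi> $ j) *\<^sub>R (y i - y j))"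
    by (rule sum.Sigma) auto
  also have "Sigma (sources E) (\<lambda>j. {i. (j, i) \<in> E}) = E"
    unfolding sources_def by force
  finally show "gam V E k y \<xi> = gamma_edges E k y \<xi>"
    unfolding gamma_edges_def by (simp add: split_def)
qed

lemma linear_gamma_edges: "linear (gamma_edges E k y)"
  by (rule linearI)
    (simp_all add: gamma_edges_def scaleR_sum_right algebra_simps sum.distrib[symmetric])

lemma gamma_edges_cong_sources:
  assumes "\<forall>i\<in>sources E. \<xi> $ i = c * \<zeta> $ i"
  shows "gamma_edges E k y \<xi> = c *\<^sub>R gamma_edges E k y \<zeta>"
  using assms unfolding gamma_edges_def sources_def scaleR_sum_right
  by (intro sum.cong) auto

lemma gamma_edges_in_stoich_space: "gamma_edges E k y \<xi> \<in> stoich_space y E"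
  unfolding gamma_edges_def stoich_space_def by (intro span_sum span_mul span_base) force

lemma gamma_edges_UN_disjoint:
  fixes l :: nat
  assumes "\<forall>j<l. \<forall>j'<l. j \<noteq> j' \<longrightarrow> Es j \<inter> Es j' = {}"
  shows "gamma_edges (\<Union>j<l. Es j) k y \<xi> = (\<Sum>j<l. gamma_edges (Es j) k y \<xi>)"
  unfolding gamma_edges_def using assms by (intro sum.UNION_disjoint) (auto simp: finite_subset)

lemma ma_rhs_eq_gamma_edges: "ma_rhs E k y x = gamma_edges E k y (monomials y x)"
  unfolding ma_rhs_def gamma_edges_def monomials_def by (simp add: split_def)

lemma ln_monom:
  assumes "positive_vec x"
  shows "ln (monom x v) = v \<bullet> ln_vec x"
proof -
  have "ln (monom x v) = (\<Sum>r\<in>UNIV. ln ((x $ r) powr (v $ r)))"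
    unfolding monom_def using assms unfolding positive_vec_def
    by (intro ln_prod) (auto simp: less_imp_neq[symmetric])
  also have "\<dots> = v \<bullet> ln_vec x"
    using assms unfolding positive_vec_def inner_vec_def ln_vec_def by (simp add: ln_powr)
  finally show ?thesis .
qed

lemma monom_pos: "positive_vec x \<Longrightarrow> monom x v > 0"
  unfolding monom_def positive_vec_def by (intro prod_pos) (metis powr_gt_zero less_irrefl)

section \<open>Birch's theorem\<close>

text \<open>The monotonicity of \<open>ln\<close> gives uniqueness, and existence comes from
  minimising the strictly convex, coercive function \<open>\<Sum>\<^sub>r exp (a\<^sub>r + w\<^sub>r) - x'\<^sub>r w\<^sub>r\<close> over \<open>L\<^sup>\<bottom>\<close>.\<close>

lemma log_orthogonal_unique:
  fixes L :: "(real^'n) set"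
  assumes p1: "positive_vec x1" and p2: "positive_vec x2" and diff: "x1 - x2 \<in> L"
    and o1: "\<forall>v\<in>L. (ln_vec x1 - a) \<bullet> v = 0" and o2: "\<forall>v\<in>L. (ln_vec x2 - a) \<bullet> v = 0"
  shows "x1 = x2"
proof -
  have pos: "x1 $ r > 0" "x2 $ r > 0" for r using p1 p2 unfolding positive_vec_def by auto
  define d where "d r = (ln (x1 $ r) - ln (x2 $ r)) * (x1 $ r - x2 $ r)" for r
  have nonneg: "d r \<ge> 0" for r
    unfolding d_def using pos[of r]
    by (cases "x1 $ r \<le> x2 $ r") (auto intro: mult_nonpos_nonpos mult_nonneg_nonneg)
  have "(ln_vec x1 - ln_vec x2) \<bullet> (x1 - x2) = (ln_vec x1 - a) \<bullet> (x1 - x2) - (ln_vec x2 - a) \<bullet> (x1 - x2)"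
    by (simp add: inner_diff_left)
  also have "\<dots> = 0" using o1 o2 diff by simp
  finally have "sum d UNIV = 0"
    by (simp add: inner_vec_def ln_vec_def d_def)
  then have "d r = 0" for r
    using nonneg by (simp add: sum_nonneg_eq_0_iff)
  then have "x1 $ r = x2 $ r" for r
    using ln_inj_iff[OF pos(1)[of r] pos(2)[of r]] unfolding d_def by auto
  then show ?thesis by (simp add: vec_eq_iff)
qed

lemma exp_ge_quarter_square: "t \<ge> 0 \<Longrightarrow> t\<^sup>2 / 4 \<le> exp (t::real)"
proof -
  assume t: "t \<ge> 0"
  have "t / 2 \<le> exp (t / 2)"
    using exp_ge_add_one_self[of "t / 2"] by linarith
  then have "(t / 2)\<^sup>2 \<le> (exp (t / 2))\<^sup>2"
    using t by (intro power_mono) auto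
  then show ?thesis
    by (simp add: power2_eq_square exp_add[symmetric] power_divide)
qed

lemma exp_minus_linear_ge:
  fixes c p t :: real
  assumes p: "p > 0"
  shows "exp (c + t) - p * t \<ge> p * \<bar>t\<bar> - 4 * p\<^sup>2 / exp c"
proof (cases "t \<ge> 0")
  case True
  have "exp c * (2 * p * t - exp c * (t\<^sup>2 / 4)) \<le> 4 * p\<^sup>2"
    using zero_le_power2[of "exp c * t - 4 * p"] by (simp add: power2_eq_square algebra_simps)
  then have "2 * p * t - exp c * (t\<^sup>2 / 4) \<le> 4 * p\<^sup>2 / exp c"
    by (simp add: field_simps)
  moreover have "exp c * (t\<^sup>2 / 4) \<le> exp (c + t)"
    using exp_ge_quarter_square[OF True] by (simp add: exp_add)
  ultimately show ?thesis
    using True by simp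
next
  case False
  have "0 \<le> 4 * p\<^sup>2 / exp c" by simp
  moreover have "p * \<bar>t\<bar> = - (p * t)" using False by (simp add: abs_of_neg)
  ultimately show ?thesis
    using exp_gt_zero[of "c + t"] by linarith
qed

lemma exp_potential_coercive:
  fixes a x' :: "real^'n"
  assumes "positive_vec x'"
  obtains m C where "m > 0" "\<And>w. m * norm w - C \<le> (\<Sum>r\<in>UNIV. exp (a $ r + w $ r) - x' $ r * w $ r)"
proof
  define m where "m = Min (range (\<lambda>r. x' $ r))"
  show m: "m > 0"
    unfolding m_def using assms unfolding positive_vec_def by (subst Min_gr_iff) auto
  have mle: "m \<le> x' $ r" for r unfolding m_def by auto
  fix w :: "real^'n"
  have "m * norm w \<le> (\<Sum>r\<in>UNIV. m * \<bar>w $ r\<bar>)"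
    using m norm_le_l1_cart[of w] by (simp add: sum_distrib_left[symmetric])
  also have "\<dots> \<le> (\<Sum>r\<in>UNIV. x' $ r * \<bar>w $ r\<bar>)"
    by (intro sum_mono mult_right_mono mle) auto
  finally have "m * norm w - (\<Sum>r\<in>UNIV. 4 * (x' $ r)\<^sup>2 / exp (a $ r))
      \<le> (\<Sum>r\<in>UNIV. x' $ r * \<bar>w $ r\<bar> - 4 * (x' $ r)\<^sup>2 / exp (a $ r))"
    by (simp add: sum_subtractf)
  also have "\<dots> \<le> (\<Sum>r\<in>UNIV. exp (a $ r + w $ r) - x' $ r * w $ r)"
    using assms unfolding positive_vec_def by (intro sum_mono exp_minus_linear_ge) auto
  finally show "m * norm w - (\<Sum>r\<in>UNIV. 4 * (x' $ r)\<^sup>2 / exp (a $ r))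
      \<le> (\<Sum>r\<in>UNIV. exp (a $ r + w $ r) - x' $ r * w $ r)" .
qed

lemma exp_potential_stationary_point:
  fixes W :: "(real^'n) set" and a x' :: "real^'n"
  assumes W: "subspace W" and x': "positive_vec x'"
  obtains w0 where "w0 \<in> W" "\<And>v. v \<in> W \<Longrightarrow> (\<Sum>r\<in>UNIV. v $ r * (exp (a $ r + w0 $ r) - x' $ r)) = 0"
proof -
  define G where "G w = (\<Sum>r\<in>UNIV. exp (a $ r + w $ r) - x' $ r * w $ r)" for w :: "real^'n"
  obtain m C where m: "m > 0" and coercive: "\<And>w. m * norm w - C \<le> G w"
    using exp_potential_coercive[OF x', of a] unfolding G_def by blast
  have G_cont: "continuous_on UNIV G"
    unfolding G_def by (intro continuous_intros)
  define S where "S = W \<inter> {w. G w \<le> G 0}"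
  have "bounded S"
    unfolding bounded_iff S_def
  proof (intro exI ballI)
    fix w assume "w \<in> W \<inter> {w. G w \<le> G 0}"
    then have "m * norm w \<le> G 0 + C" using coercive[of w] by auto
    then show "norm w \<le> (G 0 + C) / m" using m by (simp add: field_simps)
  qed
  moreover have "closed S"
    unfolding S_def using G_cont by (intro closed_Int closed_subspace[OF W] closed_Collect_le) auto
  moreover have S0: "0 \<in> S"
    unfolding S_def using W subspace_0 by auto
  ultimately obtain w0 where w0: "w0 \<in> S" and w0_min: "\<forall>w\<in>S. G w0 \<le> G w"
    using continuous_attains_inf[of S G] compact_eq_bounded_closed continuous_on_subset[OF G_cont] by blast
  have min: "G w0 \<le> G w" if "w \<in> W" for w
  proof (cases "G w \<le> G 0")
    case False
    then show ?thesis using w0_min S0 by force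
  qed (use w0_min that in \<open>auto simp: S_def\<close>)
  show thesis
  proof
    show "w0 \<in> W" using w0 unfolding S_def by auto
    fix v assume v: "v \<in> W"
    have D: "((\<lambda>t. G (w0 + t *\<^sub>R v)) has_real_derivative
        (\<Sum>r\<in>UNIV. exp (a $ r + (w0 $ r + 0 * v $ r)) * v $ r - x' $ r * v $ r)) (at 0)"
      unfolding G_def by (auto intro!: derivative_eq_intros sum.cong simp: algebra_simps)
    have "\<forall>t. \<bar>0 - t\<bar> < 1 \<longrightarrow> G (w0 + 0 *\<^sub>R v) \<le> G (w0 + t *\<^sub>R v)"
      using min \<open>w0 \<in> W\<close> v W by (auto intro!: subspace_add subspace_mul)
    from DERIV_local_min[OF D zero_less_one this]
    have "(\<Sum>r\<in>UNIV. exp (a $ r + (w0 $ r + 0 * v $ r)) * v $ r - x' $ r * v $ r) = 0" .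
    then show "(\<Sum>r\<in>UNIV. v $ r * (exp (a $ r + w0 $ r) - x' $ r)) = 0"
      by (simp add: algebra_simps)
  qed
qed

lemma log_orthogonal_exists:
  fixes L :: "(real^'n) set" and a x' :: "real^'n"
  assumes L: "subspace L" and x': "positive_vec x'"
  obtains x where "positive_vec x" "x - x' \<in> L" "\<forall>v\<in>L. (ln_vec x - a) \<bullet> v = 0"
proof -
  define W where "W = {w::real^'n. \<forall>v\<in>L. w \<bullet> v = 0}"
  have "subspace W" unfolding W_def subspace_def by (auto simp: inner_add_left)
  then obtain w0 where w0: "w0 \<in> W"
    and stat: "\<And>v. v \<in> W \<Longrightarrow> (\<Sum>r\<in>UNIV. v $ r * (exp (a $ r + w0 $ r) - x' $ r)) = 0"
    using exp_potential_stationary_point[OF _ x', of W a] by blast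
  define x where "x = (\<chi> r. exp (a $ r + w0 $ r))"
  have orth: "(x - x') \<bullet> u = 0" if "u \<in> W" for u
    using stat[OF that] unfolding x_def inner_vec_def by (simp add: mult.commute)
  obtain p z where p: "p \<in> span L" and z: "\<And>w. w \<in> span L \<Longrightarrow> orthogonal z w" and pz: "x - x' = p + z"
    using orthogonal_subspace_decomp_exists[of L "x - x'"] by metis
  have "z \<in> W" unfolding W_def using z span_superset by (auto simp: orthogonal_def)
  then have "p \<bullet> z + z \<bullet> z = 0"
    using orth by (simp add: pz inner_add_left)
  moreover have "p \<bullet> z = 0" using z[OF p] by (simp add: orthogonal_def inner_commute)
  moreover have "p \<in> L" using p L span_eq_iff by blast
  ultimately have "x - x' \<in> L" using pz by simp
  moreover have "ln_vec x - a = w0" unfolding x_def ln_vec_def by (simp add: vec_eq_iff)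
  ultimately show thesis
    using that[of x] w0 unfolding W_def x_def positive_vec_def by simp
qed

lemma dim_eq_dim_image_plus_dim_kernel:
  fixes f :: "'a::euclidean_space \<Rightarrow> 'b::euclidean_space"
  assumes f: "linear f" and R: "subspace R"
  shows "dim R = dim (f ` R) + dim {x\<in>R. f x = 0}"
proof -
  define N where "N = {x\<in>R. f x = 0}"
  define C where "C = {z\<in>R. \<forall>x\<in>N. orthogonal x z}"
  have "N = R \<inter> {x. f x = 0}" unfolding N_def by blast
  then have N: "subspace N" using subspace_inter[OF R linear_subspace_kernel[OF f]] by (simp only:)
  have "C = R \<inter> {z. \<forall>x\<in>N. orthogonal x z}" unfolding C_def by blast
  then have C: "subspace C" using subspace_inter[OF R subspace_orthogonal_to_vectors[of N]] by (simp only:)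
  have "N \<subseteq> R" unfolding N_def by blast
  then have dims: "dim C + dim N = dim R"
    unfolding C_def by (rule dim_subspace_orthogonal_to_vectors[OF N R])
  have "inj_on f C"
  proof (rule inj_onI)
    fix u v assume uv: "u \<in> C" "v \<in> C" "f u = f v"
    then have "u - v \<in> C" "u - v \<in> N"
      using subspace_diff[OF C] subspace_diff[OF R] linear_diff[OF f] unfolding C_def N_def by auto
    then have "orthogonal (u - v) (u - v)" unfolding C_def by blast
    then show "u = v" by (simp add: orthogonal_self)
  qed
  then have "dim (f ` C) = dim C"
    using dim_image_eq[OF f] C span_eq_iff by metis
  moreover have "f ` R \<subseteq> f ` C"
  proof
    fix w assume "w \<in> f ` R"
    then obtain x where x: "x \<in> R" "w = f x" by blast
    obtain p z where p: "p \<in> span N" and z: "\<And>u. u \<in> span N \<Longrightarrow> orthogonal z u" and pz: "x = p + z"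
      using orthogonal_subspace_decomp_exists[of N x] by blast
    have pN: "p \<in> N" using p N span_eq_iff by blast
    then have "z \<in> R" using pz x subspace_diff[OF R, of x p] unfolding N_def by simp
    moreover have "orthogonal u z" if "u \<in> N" for u
      using z[OF span_base[OF that]] orthogonal_commute by blast
    ultimately have "z \<in> C" unfolding C_def by blast
    moreover have "f x = f z" using pN pz linear_add[OF f] unfolding N_def by simp
    ultimately show "w \<in> f ` C" using x by blast
  qed
  moreover have "f ` C \<subseteq> f ` R" unfolding C_def by blast
  ultimately show ?thesis using dims unfolding N_def by (simp add: subset_antisym)
qed

lemma subspace_functional_inner_representation:
  fixes U :: "('a::euclidean_space) set" and \<psi> :: "'a \<Rightarrow> real"
  assumes U: "subspace U"
    and add: "\<And>u v. u \<in> U \<Longrightarrow> v \<in> U \<Longrightarrow> \<psi> (u + v) = \<psi> u + \<psi> v"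
    and scale: "\<And>c u. u \<in> U \<Longrightarrow> \<psi> (c *\<^sub>R u) = c * \<psi> u"
  obtains a where "\<And>u. u \<in> U \<Longrightarrow> a \<bullet> u = \<psi> u"
proof -
  obtain B where BU: "B \<subseteq> U" and orth: "pairwise orthogonal B" and unit: "\<And>x. x \<in> B \<Longrightarrow> norm x = 1"
    and indep: "independent B" and span: "span B = U"
    using orthonormal_basis_subspace[OF U] by metis
  have fin: "finite B" using indep independent_imp_finite by blast
  have \<psi>_sum: "\<psi> (\<Sum>b\<in>F. c b *\<^sub>R b) = (\<Sum>b\<in>F. c b * \<psi> b)" if "F \<subseteq> B" for F c
    using finite_subset[OF that fin] that
  proof (induction F rule: finite_induct)
    case empty
    then show ?case using scale[of 0 0] U subspace_0[OF U] by simp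
  next
    case (insert x F)
    then have "(\<Sum>b\<in>F. c b *\<^sub>R b) \<in> U" "x \<in> U" using BU U
      by (auto intro!: subspace_sum subspace_mul)
    then show ?case using insert by (simp add: add scale subspace_mul U)
  qed
  have dual: "(\<Sum>b'\<in>B. c b' * (b \<bullet> b')) = c b" if b: "b \<in> B" for b c
  proof -
    have "(\<Sum>b'\<in>B - {b}. c b' * (b \<bullet> b')) = 0"
      using orth b unfolding pairwise_def orthogonal_def by (intro sum.neutral) auto
    moreover have "b \<bullet> b = 1" using unit[OF b] by (simp add: norm_eq_1)
    ultimately show ?thesis using fin b by (simp add: sum.remove)
  qed
  show thesis
  proof
    fix u assume "u \<in> U"
    then obtain c where c: "u = (\<Sum>b\<in>B. c b *\<^sub>R b)" using span span_finite[OF fin] by auto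
    have "b \<bullet> u = c b" if "b \<in> B" for b
      unfolding c using dual[OF that] by (simp add: inner_sum_right)
    then have "(\<Sum>b\<in>B. \<psi> b *\<^sub>R b) \<bullet> u = (\<Sum>b\<in>B. c b * \<psi> b)"
      by (simp add: inner_sum_left mult.commute)
    also have "\<dots> = \<psi> u" using \<psi>_sum[of B c] c by simp
    finally show "(\<Sum>b\<in>B. \<psi> b *\<^sub>R b) \<bullet> u = \<psi> u" .
  qed
qed

lemma factored_functional_inner_representation:
  fixes M :: "'b \<Rightarrow> 'a::euclidean_space" and \<Phi> :: "'b \<Rightarrow> real"
  assumes D: "d0 \<in> D"
    and wd: "\<And>g h. g \<in> D \<Longrightarrow> h \<in> D \<Longrightarrow> M g = M h \<Longrightarrow> \<Phi> g = \<Phi> h"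
    and add: "\<And>g h. g \<in> D \<Longrightarrow> h \<in> D \<Longrightarrow> \<exists>s\<in>D. M s = M g + M h \<and> \<Phi> s = \<Phi> g + \<Phi> h"
    and scale: "\<And>c g. g \<in> D \<Longrightarrow> \<exists>s\<in>D. M s = c *\<^sub>R M g \<and> \<Phi> s = c * \<Phi> g"
  obtains a where "\<And>g. g \<in> D \<Longrightarrow> a \<bullet> M g = \<Phi> g"
proof -
  define \<psi> where "\<psi> u = \<Phi> (SOME g. g \<in> D \<and> M g = u)" for u
  have \<psi>: "\<psi> (M g) = \<Phi> g" if "g \<in> D" for g
  proof -
    define g' where "g' = (SOME h. h \<in> D \<and> M h = M g)"
    have "g' \<in> D \<and> M g' = M g"
      unfolding g'_def by (rule someI[of _ g]) (simp add: that)
    then show ?thesis unfolding \<psi>_def g'_def[symmetric] using wd[of g' g] that by simp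
  qed
  have add': "u + v \<in> M ` D \<and> \<psi> (u + v) = \<psi> u + \<psi> v" if uv: "u \<in> M ` D" "v \<in> M ` D" for u v
  proof -
    obtain g h where g: "g \<in> D" "u = M g" and h: "h \<in> D" "v = M h" using uv by blast
    with add[of g h] obtain s where s: "s \<in> D" "M s = u + v" "\<Phi> s = \<Phi> g + \<Phi> h" by blast
    then show ?thesis using \<psi>[OF s(1)] \<psi>[OF g(1)] \<psi>[OF h(1)] g h by (metis image_eqI)
  qed
  have scale': "c *\<^sub>R u \<in> M ` D \<and> \<psi> (c *\<^sub>R u) = c * \<psi> u" if u: "u \<in> M ` D" for c u
  proof -
    obtain g where g: "g \<in> D" "u = M g" using u by blast
    with scale[of g c] obtain s where s: "s \<in> D" "M s = c *\<^sub>R u" "\<Phi> s = c * \<Phi> g" by blast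
    then show ?thesis using \<psi>[OF s(1)] \<psi>[OF g(1)] g by (metis image_eqI)
  qed
  have "0 \<in> M ` D" using scale'[of "M d0" 0] D by simp
  then have "subspace (M ` D)" unfolding subspace_def using add' scale' by blast
  then obtain a where "\<And>u. u \<in> M ` D \<Longrightarrow> a \<bullet> u = \<psi> u"
    using subspace_functional_inner_representation[of "M ` D" \<psi>] add' scale' by blast
  then show thesis using \<psi> by (metis that image_eqI)
qed

section \<open>Source coordinates and deficiency zero\<close>

definition supported_vecs :: "'v set \<Rightarrow> (real^'v::finite) set" where
  "supported_vecs S = {x. \<forall>i. i \<notin> S \<longrightarrow> x $ i = 0}"

definition restrict_vec :: "'v set \<Rightarrow> real^'v \<Rightarrow> real^'v::finite" where
  "restrict_vec S \<nu> = (\<chi> i. if i \<in> S then \<nu> $ i else 0)"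

lemma restrict_vec_in_supported_vecs: "restrict_vec S \<nu> \<in> supported_vecs S"
  unfolding restrict_vec_def supported_vecs_def by simp

lemma gamma_edges_restrict_vec: "gamma_edges E k y (restrict_vec (sources E) \<nu>) = gamma_edges E k y \<nu>"
  using gamma_edges_cong_sources[of E "restrict_vec (sources E) \<nu>" 1 \<nu>] by (simp add: restrict_vec_def)

lemma subspace_supported_vecs: "subspace (supported_vecs S)"
  unfolding supported_vecs_def subspace_def by auto

lemma dim_supported_vecs: "dim (supported_vecs S) = card S"
  using dim_substandard_cart[where 'a=real, of S] unfolding supported_vecs_def dim_vec_eq .

lemma sum_axis_diff_scaleR:
  fixes f :: "'v::finite \<Rightarrow> 'a::real_vector"
  assumes "i \<in> S" "i' \<in> S"
  shows "(\<Sum>j\<in>S. (axis i 1 - axis i' 1 :: real^'v) $ j *\<^sub>R f j) = f i - f i'"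
  using assms by (simp add: axis_def scaleR_diff_left sum_subtractf if_distrib[of "\<lambda>x. x *\<^sub>R _"] cong: if_cong)

lemma sum_axis_diff:
  assumes "i \<in> S" "i' \<in> S"
  shows "(\<Sum>j\<in>S. (axis i 1 - axis i' 1 :: real^'v::finite) $ j) = 0"
  using sum_axis_diff_scaleR[OF assms, of "\<lambda>_. 1::real"] by simp

lemma sum_scaleR_in_span_diffs:
  fixes y :: "'v \<Rightarrow> 'a::real_vector"
  assumes "i0 \<in> S" and "(\<Sum>i\<in>S. c i) = 0"
  shows "(\<Sum>i\<in>S. c i *\<^sub>R y i) \<in> span {y i - y i' | i i'. i \<in> S \<and> i' \<in> S}"
proof -
  have "(\<Sum>i\<in>S. c i *\<^sub>R y i) = (\<Sum>i\<in>S. c i *\<^sub>R (y i - y i0))"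
    using assms(2) by (simp add: scaleR_diff_right sum_subtractf scaleR_sum_left[symmetric])
  also have "\<dots> \<in> span {y i - y i' | i i'. i \<in> S \<and> i' \<in> S}"
    using assms(1) by (intro span_sum span_mul span_base) auto
  finally show ?thesis .
qed

lemma card_sources_eq_dim_L_space_plus_defic:
  fixes E :: "('v::finite \<times> 'v) set" and y :: "'v \<Rightarrow> real^'n"
  assumes i0: "i0 \<in> sources E"
  shows "card (sources E) = dim (L_space y E) + 1 + defic y E"
proof -
  let ?s = "sources E"
  let ?R = "supported_vecs ?s"
  define \<sigma> where "\<sigma> x = (\<Sum>i\<in>?s. x $ i)" for x :: "real^'v"
  define D where "D x = (\<Sum>i\<in>?s. x $ i *\<^sub>R y i)" for x :: "real^'v"
  define R0 where "R0 = {x\<in>?R. \<sigma> x = 0}"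
  have \<sigma>: "linear \<sigma>" unfolding \<sigma>_def by (rule linearI) (simp_all add: sum.distrib sum_distrib_left)
  have D: "linear D" unfolding D_def
    by (rule linearI) (simp_all add: sum.distrib scaleR_add_left scaleR_sum_right)
  have "r \<in> \<sigma> ` ?R" for r
    using i0 unfolding \<sigma>_def supported_vecs_def by (intro image_eqI[of _ _ "axis i0 r"]) (auto simp: axis_def)
  then have "\<sigma> ` ?R = UNIV" by blast
  then have "dim (supported_vecs ?s) = 1 + dim R0"
    using dim_eq_dim_image_plus_dim_kernel[OF \<sigma> subspace_supported_vecs] unfolding R0_def by simp
  moreover have R0: "subspace R0"
    unfolding R0_def supported_vecs_def subspace_def \<sigma>_def by (auto simp: sum.distrib sum_distrib_left[symmetric])
  moreover have "{x\<in>R0. D x = 0} = defic_kernel y E"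
    unfolding R0_def supported_vecs_def defic_kernel_def D_def \<sigma>_def by auto
  moreover have "D ` R0 = L_space y E"
  proof
    show "D ` R0 \<subseteq> L_space y E"
      unfolding R0_def D_def \<sigma>_def L_space_def using sum_scaleR_in_span_diffs[OF i0] by auto
    have "y i - y i' \<in> D ` R0" if "i \<in> ?s" "i' \<in> ?s" for i i'
      using that sum_axis_diff[OF that] sum_axis_diff_scaleR[OF that, of y]
      unfolding R0_def D_def \<sigma>_def supported_vecs_def
      by (intro image_eqI[of _ _ "axis i 1 - axis i' 1"]) (auto simp: axis_def)
    then show "L_space y E \<subseteq> D ` R0"
      unfolding L_space_def using linear_subspace_image[OF D R0] by (intro span_minimal) auto
  qed
  ultimately show ?thesis
    using dim_eq_dim_image_plus_dim_kernel[OF D R0] dim_supported_vecs[of ?s] unfolding defic_def by simp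
qed

lemma card_sources_eq_dim_L_space_plus_dim_kernel:
  fixes E :: "('v::finite \<times> 'v) set" and y :: "'v \<Rightarrow> real^'n"
  assumes loopless: "\<forall>(i, i')\<in>E. i \<noteq> i'" and K: "kin_space (verts E) E k y = L_space y E"
  shows "card (sources E) = dim (L_space y E) + dim {x\<in>supported_vecs (sources E). gamma_edges E k y x = 0}"
proof -
  have "range (gamma_edges E k y) \<subseteq> gamma_edges E k y ` supported_vecs (sources E)"
    using gamma_edges_restrict_vec restrict_vec_in_supported_vecs by (metis image_eqI image_subsetI)
  then have "gamma_edges E k y ` supported_vecs (sources E) = range (gamma_edges E k y)" by blast
  also have "\<dots> = L_space y E"
    using K unfolding kin_space_def gam_eq_gamma_edges[OF order_refl loopless] .
  moreover have "dim (supported_vecs (sources E)) = dim (gamma_edges E k y ` supported_vecs (sources E))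
      + dim {x\<in>supported_vecs (sources E). gamma_edges E k y x = 0}"
    by (rule dim_eq_dim_image_plus_dim_kernel[OF linear_gamma_edges subspace_supported_vecs])
  ultimately show ?thesis by (simp add: dim_supported_vecs)
qed

text \<open>By rank-nullity the kernel of \<open>\<Gamma>\<^sub>k\<close> on the source coordinates is one-dimensional.\<close>

lemma positive_kernel_ray_of_defic_zero:
  fixes E :: "('v::finite \<times> 'v) set" and y :: "'v \<Rightarrow> real^'n"
  assumes loopless: "\<forall>(i, i')\<in>E. i \<noteq> i'" and i0: "i0 \<in> sources E"
    and K: "kin_space (verts E) E k y = L_space y E" and d0: "defic y E = 0"
    and \<xi>: "\<forall>i\<in>sources E. \<xi> $ i > 0" "gamma_edges E k y \<xi> = 0"
    and \<nu>: "\<forall>i\<in>sources E. \<nu> $ i > 0" "gamma_edges E k y \<nu> = 0"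
  shows "\<exists>c>0. \<forall>i\<in>sources E. \<nu> $ i = c * \<xi> $ i"
proof -
  let ?s = "sources E"
  define N where "N = {x\<in>supported_vecs ?s. gamma_edges E k y x = 0}"
  have "dim N = 1"
    using card_sources_eq_dim_L_space_plus_dim_kernel[OF loopless K]
      card_sources_eq_dim_L_space_plus_defic[OF i0, of y] d0 unfolding N_def by simp
  moreover have "N = supported_vecs ?s \<inter> {x. gamma_edges E k y x = 0}"
    unfolding N_def by blast
  then have "subspace N"
    using subspace_inter[OF subspace_supported_vecs linear_subspace_kernel[OF linear_gamma_edges]] by (simp only:)
  moreover have "restrict_vec ?s \<xi> \<in> N" "restrict_vec ?s \<nu> \<in> N"
    unfolding N_def using \<xi> \<nu> by (simp_all add: gamma_edges_restrict_vec restrict_vec_in_supported_vecs)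
  moreover have "restrict_vec ?s \<xi> \<noteq> 0"
    using \<xi>(1) i0 unfolding restrict_vec_def by (auto simp: vec_eq_iff intro!: exI[of _ i0])
  ultimately have "span {restrict_vec ?s \<xi>} = N"
    by (intro subspace_dim_equal span_minimal) (simp_all add: dim_singleton)
  then obtain c where c: "restrict_vec ?s \<nu> = c *\<^sub>R restrict_vec ?s \<xi>"
    using \<open>restrict_vec ?s \<nu> \<in> N\<close> by (auto simp: span_singleton)
  have ci: "\<nu> $ i = c * \<xi> $ i" if "i \<in> ?s" for i
    using arg_cong[OF c, of "\<lambda>v. v $ i"] that by (simp add: restrict_vec_def)
  then have "0 < c * \<xi> $ i0" using \<nu>(1) i0 by simp
  then have "c > 0" using \<xi>(1) i0 by (auto simp: zero_less_mult_iff)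
  then show ?thesis using ci by blast
qed

section \<open>Summation by parts and logarithmic ratios\<close>

lemma sorted_wrt_greater_nth_le_iff:
  fixes cs :: "'a::linorder list"
  assumes "sorted_wrt (>) cs" "r < length cs" "p < length cs"
  shows "cs ! r \<le> cs ! p \<longleftrightarrow> p \<le> r"
proof (cases p r rule: linorder_cases)
  case less
  then show ?thesis using sorted_wrt_nth_less[OF assms(1) less assms(2)] by simp
next
  case greater
  then show ?thesis using sorted_wrt_nth_less[OF assms(1) greater assms(3)] by simp
qed simp

text \<open>Summation by parts along the level sets of \<open>q\<close>, whose values \<open>cs\<close> are listed in decreasing
  order: the partial sums of the level weights are the weights of the upper level sets \<open>{q \<ge> cs!p}\<close>.\<close>

lemma sum_level_sets_prefix:
  fixes cs :: "real list" and q w :: "'v \<Rightarrow> real"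
  assumes S: "finite S" and cs: "sorted_wrt (>) cs" "q ` S = set cs" and p: "p < length cs"
  shows "(\<Sum>m=1..p+1. \<Sum>i\<in>{i\<in>S. q i = cs!(m-1)}. w i) = (\<Sum>i\<in>S. if q i \<ge> cs!p then w i else 0)"
proof -
  have "(\<Sum>m=1..p+1. \<Sum>i\<in>{i\<in>S. q i = cs!(m-1)}. w i) = (\<Sum>r\<in>{0..p}. \<Sum>i\<in>{i\<in>S. q i = cs!(Suc r - 1)}. w i)"
    by (subst sum.shift_bounds_cl_Suc_ivl[symmetric]) simp
  also have "\<dots> = (\<Sum>r\<le>p. \<Sum>i\<in>S. if q i = cs!r then w i else 0)"
    using S by (simp add: atLeast0AtMost sum.inter_filter)
  also have "\<dots> = (\<Sum>i\<in>S. \<Sum>r\<le>p. if q i = cs!r then w i else 0)"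
    by (rule sum.swap)
  also have "\<dots> = (\<Sum>i\<in>S. if q i \<ge> cs!p then w i else 0)"
  proof (intro sum.cong refl)
    fix i assume "i \<in> S"
    then have "q i \<in> set cs" using cs(2) by blast
    then obtain r where r: "r < length cs" "q i = cs!r" by (metis in_set_conv_nth)
    have "(\<Sum>r'\<le>p. if q i = cs!r' then w i else 0) = (\<Sum>r'\<le>p. if r' = r then w i else 0)"
    proof (intro sum.cong refl)
      fix r' assume "r' \<in> {..p}"
      then have "r' < length cs" using p by simp
      then have "cs!r' = cs!r \<longleftrightarrow> r' = r"
        using sorted_wrt_greater_nth_le_iff[OF cs(1) r(1)] sorted_wrt_greater_nth_le_iff[OF cs(1) _ r(1)]
        by (metis order_antisym order_refl)
      then show "(if q i = cs!r' then w i else 0) = (if r' = r then w i else 0)" using r by auto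
    qed
    also have "\<dots> = (if q i \<ge> cs!p then w i else 0)"
      using r sorted_wrt_greater_nth_le_iff[OF cs(1) p r(1)] by simp
    finally show "(\<Sum>r'\<le>p. if q i = cs!r' then w i else 0) = (if q i \<ge> cs!p then w i else 0)" .
  qed
  finally show ?thesis .
qed

lemma sum_level_sets_telescope:
  fixes cs :: "real list" and q w :: "'v \<Rightarrow> real" and F :: "real \<Rightarrow> real"
  assumes S: "finite S" and cs: "sorted_wrt (>) cs" "q ` S = set cs" and w: "(\<Sum>i\<in>S. w i) = 0"
  shows "(\<Sum>i\<in>S. w i * F (q i)) =
    (\<Sum>p<length cs - 1. (\<Sum>i\<in>S. if q i \<ge> cs!p then w i else 0) * (F (cs!p) - F (cs!(p+1))))"
proof -
  let ?n = "length cs"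
  let ?D = "\<lambda>p. F (cs!p) - F (cs!(p+1))"
  have telescope: "(\<Sum>p<?n-1. (if q i \<ge> cs!p then 1 else 0) * ?D p) = F (q i) - F (cs!(?n-1))"
    if "i \<in> S" for i
  proof -
    have "q i \<in> set cs" using that cs(2) by blast
    then obtain r where r: "r < ?n" "q i = cs!r" by (metis in_set_conv_nth)
    have "(\<Sum>p<?n-1. (if q i \<ge> cs!p then 1 else 0) * ?D p) = (\<Sum>p<?n-1. if r \<le> p then ?D p else 0)"
    proof (intro sum.cong refl)
      fix p assume "p \<in> {..<?n-1}"
      then have "cs!p \<le> cs!r \<longleftrightarrow> r \<le> p" using sorted_wrt_greater_nth_le_iff[OF cs(1) _ r(1), of p] by simp
      then show "(if q i \<ge> cs!p then 1 else 0) * ?D p = (if r \<le> p then ?D p else 0)" using r by simp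
    qed
    also have "\<dots> = (\<Sum>p\<in>{p\<in>{..<?n-1}. r \<le> p}. ?D p)"
      by (rule sum.inter_filter[symmetric]) simp
    also have "\<dots> = (\<Sum>p\<in>{r..<?n-1}. (\<lambda>p. - F (cs!p)) (Suc p) - (\<lambda>p. - F (cs!p)) p)"
      by (intro sum.cong) auto
    also have "\<dots> = F (cs!r) - F (cs!(?n-1))"
      using r by (subst sum_Suc_diff') auto
    finally show ?thesis using r by simp
  qed
  have "(\<Sum>p<?n-1. (\<Sum>i\<in>S. if q i \<ge> cs!p then w i else 0) * ?D p)
      = (\<Sum>p<?n-1. \<Sum>i\<in>S. w i * ((if q i \<ge> cs!p then 1 else 0) * ?D p))"
    by (intro sum.cong refl) (auto simp: sum_distrib_right intro!: sum.cong)
  also have "\<dots> = (\<Sum>i\<in>S. \<Sum>p<?n-1. w i * ((if q i \<ge> cs!p then 1 else 0) * ?D p))"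
    by (rule sum.swap)
  also have "\<dots> = (\<Sum>i\<in>S. w i * (F (q i) - F (cs!(?n-1))))"
    by (intro sum.cong refl) (simp only: sum_distrib_left[symmetric] telescope)
  also have "\<dots> = (\<Sum>i\<in>S. w i * F (q i)) - (\<Sum>i\<in>S. w i) * F (cs!(?n-1))"
    by (simp add: algebra_simps sum_subtractf sum_distrib_right)
  finally show ?thesis using w by simp
qed

definition log_ratio :: "real list \<Rightarrow> nat \<Rightarrow> real \<Rightarrow> real" where
  "log_ratio cs p u = ln (1 + cs!p * u) - ln (1 + cs!(p+1) * u)"

lemma one_plus_mult_pos:
  fixes c u :: real
  assumes "\<bar>c\<bar> \<le> 1" "\<bar>u\<bar> < 1"
  shows "1 + c * u > 0"
proof -
  have "\<bar>c * u\<bar> < 1"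
    using assms mult_mono[of "\<bar>c\<bar>" 1 "\<bar>u\<bar>" 1] by (auto simp: abs_mult) (smt (verit, best) mult_left_le_one_le)
  then show ?thesis by linarith
qed

lemma log_ratio_strict_mono:
  fixes cs :: "real list"
  assumes cs: "sorted_wrt (>) cs" "\<forall>c\<in>set cs. \<bar>c\<bar> \<le> 1" and p: "p + 1 < length cs"
    and uv: "-1 < u" "u < v" "v < 1"
  shows "log_ratio cs p u < log_ratio cs p v"
proof -
  have c: "\<bar>cs!p\<bar> \<le> 1" "\<bar>cs!(p+1)\<bar> \<le> 1" "cs!(p+1) < cs!p"
    using cs p sorted_wrt_nth_less[OF cs(1), of p "p+1"] by auto
  have pos: "1 + cs!p * u > 0" "1 + cs!(p+1) * u > 0" "1 + cs!p * v > 0" "1 + cs!(p+1) * v > 0"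
    using uv c by (auto intro!: one_plus_mult_pos)
  have "(1 + cs!p * v) * (1 + cs!(p+1) * u) - (1 + cs!p * u) * (1 + cs!(p+1) * v) = (cs!p - cs!(p+1)) * (v - u)"
    by (simp add: algebra_simps)
  also have "\<dots> > 0" using c uv by simp
  finally have "ln ((1 + cs!p * u) * (1 + cs!(p+1) * v)) < ln ((1 + cs!p * v) * (1 + cs!(p+1) * u))"
    using pos by simp
  then show ?thesis
    unfolding log_ratio_def using pos by (simp add: ln_mult)
qed

lemma log_ratio_zero [simp]: "log_ratio cs p 0 = 0"
  by (simp add: log_ratio_def)

lemma ln_one_minus_unbounded: "\<exists>u. 0 \<le> u \<and> u < 1 \<and> ln (1 - u) < - (Z::real)"
proof -
  define m where "m = min 1 (exp (- Z - 1))"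
  have "0 < m" "m \<le> 1" unfolding m_def by auto
  moreover have "ln m \<le> - Z - 1"
    unfolding m_def by (metis exp_gt_zero ln_exp ln_le_cancel_iff min.cobounded2 min_def zero_less_one)
  ultimately show ?thesis by (intro exI[of _ "1 - m"]) auto
qed

text \<open>\<open>H\<close> is what \<open>\<Sum>\<^sub>i b\<^sub>i ln (1 + q\<^sub>i u)\<close> becomes after summation by parts; up to a global sign,
  condition (III) yields the assumptions on the weights \<open>A\<close> below.\<close>

locale log_ratio_weights =
  fixes cs :: "real list" and A :: "nat \<Rightarrow> real"
  assumes sorted: "sorted_wrt (>) cs" and length: "length cs \<ge> 2"
    and first: "cs!0 = 1" and last: "cs!(length cs - 1) = -1"
    and nonneg: "\<And>p. p < length cs - 1 \<Longrightarrow> A p \<ge> 0"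
    and pos_first: "A 0 > 0" and pos_last: "A (length cs - 2) > 0"
begin

definition H :: "real \<Rightarrow> real" where
  "H u = (\<Sum>p<length cs - 1. A p * log_ratio cs p u)"

lemma abs_le_one: "c \<in> set cs \<Longrightarrow> \<bar>c\<bar> \<le> 1"
proof -
  assume "c \<in> set cs"
  then obtain r where r: "r < length cs" "c = cs!r" by (metis in_set_conv_nth)
  have "0 < length cs" using length by linarith
  then have "cs!r \<le> cs!0" "cs!(length cs - 1) \<le> cs!r"
    using sorted_wrt_greater_nth_le_iff[OF sorted r(1), of 0]
      sorted_wrt_greater_nth_le_iff[OF sorted _ r(1), of "length cs - 1"] r by simp_all
  then show ?thesis using r first last by simp
qed

lemma strict_mono_log_ratio:
  "p < length cs - 1 \<Longrightarrow> -1 < u \<Longrightarrow> u < v \<Longrightarrow> v < 1 \<Longrightarrow> log_ratio cs p u < log_ratio cs p v"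
  using log_ratio_strict_mono[OF sorted] abs_le_one by simp

lemma log_ratio_nonneg: "p < length cs - 1 \<Longrightarrow> 0 \<le> u \<Longrightarrow> u < 1 \<Longrightarrow> log_ratio cs p u \<ge> 0"
  using strict_mono_log_ratio[of p 0 u] by (cases "u = 0") auto

lemma log_ratio_nonpos: "p < length cs - 1 \<Longrightarrow> -1 < u \<Longrightarrow> u \<le> 0 \<Longrightarrow> log_ratio cs p u \<le> 0"
  using strict_mono_log_ratio[of p u 0] by (cases "u = 0") auto

lemma H_strict_mono:
  assumes "-1 < u" "u < v" "v < 1"
  shows "H u < H v"
  unfolding H_def
proof (rule sum_strict_mono_ex1)
  show "\<forall>p\<in>{..<length cs - 1}. A p * log_ratio cs p u \<le> A p * log_ratio cs p v"
    using assms by (intro ballI mult_left_mono less_imp_le strict_mono_log_ratio nonneg) auto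
  show "\<exists>p\<in>{..<length cs - 1}. A p * log_ratio cs p u < A p * log_ratio cs p v"
    using assms pos_first length strict_mono_log_ratio[of 0 u v]
    by (intro bexI[of _ 0] mult_strict_left_mono) auto
qed simp

text \<open>Near \<open>u = 1\<close> the last ratio contains \<open>- ln (1 - u)\<close>; near \<open>u = -1\<close> the first contains
  \<open>ln (1 + u)\<close>. All other terms have the right sign there.\<close>

lemma H_unbounded_above: "\<exists>u. 0 \<le> u \<and> u < 1 \<and> Z < H u"
proof -
  let ?p = "length cs - 2"
  define c where "c = cs!?p"
  have "cs!(?p + 1) < c" "cs!(?p + 1) = -1" "c \<le> 1"
    using sorted_wrt_nth_less[OF sorted, of ?p "?p + 1"] length last abs_le_one[of c]
    unfolding c_def by (auto simp: Suc_diff_Suc numeral_2_eq_2)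
  then have c: "-1 < c" "c \<le> 1" "cs!(?p + 1) = -1" by auto
  define m where "m = min 1 (1 + c)"
  have m: "m > 0" unfolding m_def using c by simp
  obtain u where u: "0 \<le> u" "u < 1" "ln (1 - u) < - (Z / A ?p - ln m)"
    using ln_one_minus_unbounded by blast
  have "m \<le> 1 + c * u"
    using c u mult_left_mono_neg[of u 1 c] unfolding m_def by (cases "c \<ge> 0") auto
  then have "ln m - ln (1 - u) \<le> log_ratio cs ?p u"
    unfolding log_ratio_def c_def[symmetric] c(3) using m by simp
  then have "A ?p * (ln m - ln (1 - u)) \<le> A ?p * log_ratio cs ?p u"
    using pos_last by (simp add: mult_left_mono)
  moreover have "Z / A ?p < ln m - ln (1 - u)" using u by linarith
  then have "Z < A ?p * (ln m - ln (1 - u))"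
    using pos_last by (simp add: divide_less_eq mult.commute)
  ultimately have "Z < A ?p * log_ratio cs ?p u" by linarith
  also have "\<dots> \<le> H u"
    unfolding H_def using length u nonneg log_ratio_nonneg
    by (intro member_le_sum) (auto intro!: mult_nonneg_nonneg)
  finally show ?thesis using u by blast
qed

lemma H_unbounded_below: "\<exists>u. -1 < u \<and> u \<le> 0 \<and> H u < Z"
proof -
  define c where "c = cs!1"
  have c: "c < 1" "-1 \<le> c"
    using sorted_wrt_nth_less[OF sorted, of 0 1] length first abs_le_one[of c]
    unfolding c_def by auto
  define m where "m = min 1 (1 - c)"
  have m: "m > 0" unfolding m_def using c by simp
  obtain u' where u': "0 \<le> u'" "u' < 1" "ln (1 - u') < - (- ln m - Z / A 0)"
    using ln_one_minus_unbounded by blast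
  define u where "u = - u'"
  have u: "-1 < u" "u \<le> 0" "ln (1 + u) < Z / A 0 + ln m" using u' unfolding u_def by auto
  have "m \<le> 1 + c * u"
    using c u mult_left_mono[of "-1" u c] mult_nonpos_nonpos[of c u] unfolding m_def by (cases "c \<ge> 0") auto
  then have "ln m \<le> ln (1 + c * u)" using m by simp
  then have "log_ratio cs 0 u \<le> ln (1 + u) - ln m"
    unfolding log_ratio_def c_def using first by simp
  also have "\<dots> < Z / A 0" using u by linarith
  finally have "A 0 * log_ratio cs 0 u < Z"
    using pos_first by (simp add: less_divide_eq mult.commute)
  moreover have "H u \<le> A 0 * log_ratio cs 0 u"
  proof -
    have "H u = A 0 * log_ratio cs 0 u + (\<Sum>p\<in>{..<length cs - 1} - {0}. A p * log_ratio cs p u)"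
      unfolding H_def using length by (subst sum.remove[of _ 0]) auto
    moreover have "(\<Sum>p\<in>{..<length cs - 1} - {0}. A p * log_ratio cs p u) \<le> 0"
      using nonneg log_ratio_nonpos u by (intro sum_nonpos) (auto intro!: mult_nonneg_nonpos)
    ultimately show ?thesis by simp
  qed
  ultimately show ?thesis using u by force
qed

lemma H_surj: "\<exists>u. -1 < u \<and> u < 1 \<and> H u = Z"
proof -
  obtain ul where ul: "-1 < ul" "ul \<le> 0" "H ul < Z" using H_unbounded_below by blast
  obtain uh where uh: "0 \<le> uh" "uh < 1" "Z < H uh" using H_unbounded_above by blast
  have "1 + c * u > 0" if "c \<in> set cs" "ul \<le> u" "u \<le> uh" for c u
    using that ul uh abs_le_one by (intro one_plus_mult_pos) auto
  then have "continuous_on {ul..uh} H"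
    unfolding H_def log_ratio_def using length
    by (intro continuous_intros) (auto simp: less_imp_neq[symmetric])
  then obtain u where "ul \<le> u" "u \<le> uh" "H u = Z"
    using IVT'[of H ul Z uh] ul uh by force
  then show ?thesis using ul uh by (intro exI[of _ u]) auto
qed

end

section \<open>Deficiency one\<close>

definition ln_balanced :: "('v \<Rightarrow> real^'n) \<Rightarrow> ('v::finite \<times> 'v) set \<Rightarrow> real^'v \<Rightarrow> bool" where
  "ln_balanced y E \<nu> \<longleftrightarrow> (\<forall>\<beta>\<in>defic_kernel y E. (\<Sum>i\<in>sources E. \<beta> $ i * ln (\<nu> $ i)) = 0)"

definition balanced_kernel_ray :: "('v::finite \<times> 'v) set \<Rightarrow> ('v \<times> 'v \<Rightarrow> real) \<Rightarrow> ('v \<Rightarrow> real^'n) \<Rightarrow> real^'v \<Rightarrow> bool" where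
  "balanced_kernel_ray E k y \<zeta> \<longleftrightarrow>
     (\<forall>i\<in>sources E. \<zeta> $ i > 0) \<and> gamma_edges E k y \<zeta> = 0 \<and> ln_balanced y E \<zeta> \<and>
     (\<forall>\<nu>. (\<forall>i\<in>sources E. \<nu> $ i > 0) \<and> gamma_edges E k y \<nu> = 0 \<and> ln_balanced y E \<nu>
        \<longrightarrow> (\<exists>c>0. \<forall>i\<in>sources E. \<nu> $ i = c * \<zeta> $ i))"

lemma ln_balanced_span_iff:
  assumes "defic_kernel y E = span {b}"
  shows "ln_balanced y E \<nu> \<longleftrightarrow> (\<Sum>i\<in>sources E. b $ i * ln (\<nu> $ i)) = 0"
  unfolding ln_balanced_def assms
  by (auto simp: span_singleton sum_distrib_left[symmetric] mult.assoc intro: span_base)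

lemma Pclos_iff:
  fixes E :: "('v::finite \<times> 'v) set"
  assumes loopless: "\<forall>(i, i')\<in>E. i \<noteq> i'"
  shows "\<xi> \<in> Pclos E k y \<longleftrightarrow> \<xi> \<in> supported_vecs (sources E) \<and> (\<forall>i\<in>sources E. \<xi> $ i \<ge> 0) \<and>
       gamma_edges E k y \<xi> = 0 \<and> (\<Sum>i\<in>sources E. \<xi> $ i) = 1"
  unfolding Pclos_def supported_vecs_def gam_eq_gamma_edges[OF order_refl loopless] by simp

lemma normalized_in_Pclos:
  fixes E :: "('v::finite \<times> 'v) set"
  assumes loopless: "\<forall>(i, i')\<in>E. i \<noteq> i'" and pos: "\<forall>i\<in>sources E. \<nu> $ i > 0"
    and ker: "gamma_edges E k y \<nu> = 0" and \<sigma>: "(\<Sum>i\<in>sources E. \<nu> $ i) = \<sigma>" "\<sigma> > 0"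
  shows "(1 / \<sigma>) *\<^sub>R restrict_vec (sources E) \<nu> \<in> Pclos E k y"
  unfolding Pclos_iff[OF loopless]
proof (intro conjI)
  show "(1 / \<sigma>) *\<^sub>R restrict_vec (sources E) \<nu> \<in> supported_vecs (sources E)"
    using restrict_vec_in_supported_vecs subspace_supported_vecs subspace_mul by blast
  show "\<forall>i\<in>sources E. 0 \<le> ((1 / \<sigma>) *\<^sub>R restrict_vec (sources E) \<nu>) $ i"
    using pos \<sigma> by (simp add: restrict_vec_def less_imp_le)
  show "gamma_edges E k y ((1 / \<sigma>) *\<^sub>R restrict_vec (sources E) \<nu>) = 0"
    using ker by (simp add: linear_scale[OF linear_gamma_edges] gamma_edges_restrict_vec)
  show "(\<Sum>i\<in>sources E. ((1 / \<sigma>) *\<^sub>R restrict_vec (sources E) \<nu>) $ i) = 1"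
    using \<sigma> by (simp add: restrict_vec_def sum_divide_distrib[symmetric])
qed

text \<open>Otherwise the segment could be prolonged beyond \<open>e2\<close> inside \<open>Pclos\<close>.\<close>

lemma Pclos_endpoint_has_zero:
  fixes E :: "('v::finite \<times> 'v) set"
  assumes loopless: "\<forall>(i, i')\<in>E. i \<noteq> i'"
    and seg: "Pclos E k y = closed_segment e1 e2" and ne: "e1 \<noteq> e2"
  shows "\<exists>i\<in>sources E. e2 $ i = 0"
proof (rule ccontr)
  let ?s = "sources E"
  assume "\<not> (\<exists>i\<in>?s. e2 $ i = 0)"
  have e1: "e1 \<in> Pclos E k y" and e2: "e2 \<in> Pclos E k y" using seg by auto
  note e1 = e1[unfolded Pclos_iff[OF loopless]] and e2 = e2[unfolded Pclos_iff[OF loopless]]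
  have pos2: "\<forall>i\<in>?s. e2 $ i > 0" using e2 \<open>\<not> (\<exists>i\<in>?s. e2 $ i = 0)\<close> by force
  have "?s \<noteq> {}" using e1 by auto
  define \<epsilon> where "\<epsilon> = Min ((\<lambda>i. e2 $ i / (e1 $ i + 1)) ` ?s)"
  have \<epsilon>: "\<epsilon> > 0"
    unfolding \<epsilon>_def using \<open>?s \<noteq> {}\<close> pos2 e1 by (subst Min_gr_iff) (auto intro!: divide_pos_pos)
  have \<epsilon>_le: "\<epsilon> * e1 $ i \<le> e2 $ i + \<epsilon> * e2 $ i" if "i \<in> ?s" for i
  proof -
    have "\<epsilon> \<le> e2 $ i / (e1 $ i + 1)" unfolding \<epsilon>_def using that by simp
    moreover have "e1 $ i + 1 > 0" using e1 that by (simp add: add_nonneg_pos)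
    ultimately have "\<epsilon> * (e1 $ i + 1) \<le> e2 $ i" by (simp add: le_divide_eq)
    then have "\<epsilon> * e1 $ i \<le> e2 $ i" using \<epsilon> by (simp add: algebra_simps)
    moreover have "0 \<le> \<epsilon> * e2 $ i" using \<epsilon> e2 that by simp
    ultimately show ?thesis by linarith
  qed
  define w where "w = e2 + \<epsilon> *\<^sub>R (e2 - e1)"
  have "w \<in> Pclos E k y"
    unfolding Pclos_iff[OF loopless] w_def using e1 e2 \<epsilon> \<epsilon>_le
    by (auto simp: supported_vecs_def algebra_simps linear_add[OF linear_gamma_edges]
        linear_scale[OF linear_gamma_edges] linear_diff[OF linear_gamma_edges]
        sum.distrib sum_subtractf sum_distrib_left[symmetric] intro: add_nonneg_nonneg)
  then obtain u where u: "0 \<le> u" "u \<le> 1" "w = (1 - u) *\<^sub>R e1 + u *\<^sub>R e2"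
    using seg unfolding closed_segment_def by auto
  then have "(1 + \<epsilon> - u) *\<^sub>R (e2 - e1) = 0" unfolding w_def by (simp add: algebra_simps)
  then show False using ne u \<epsilon> by simp
qed

text \<open>\<open>e1\<close>, \<open>e2\<close> are the endpoints \<open>y\<^bsup>j,1\<^esup>\<close>, \<open>y\<^bsup>j,2\<^esup>\<close> of the closure of \<open>P\<^sub>j\<close> and \<open>q\<close> is the paper's \<open>q\<^sup>j\<close>;
  \<open>seg_point u\<close> is the point \<open>((1 + u) e1 + (1 - u) e2) / 2\<close> of the segment.\<close>

locale Pclos_segment =
  fixes E :: "('v::finite \<times> 'v) set" and k :: "'v \<times> 'v \<Rightarrow> real" and y :: "'v \<Rightarrow> real^'n"
    and e1 e2 :: "real^'v"
  assumes loopless: "\<forall>(i, i')\<in>E. i \<noteq> i'"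
    and segment: "Pclos E k y = closed_segment e1 e2" and distinct: "e1 \<noteq> e2"
    and positive_kernel: "\<exists>\<xi>. (\<forall>i\<in>sources E. \<xi> $ i > 0) \<and> gamma_edges E k y \<xi> = 0"
begin

definition mid :: "'v \<Rightarrow> real" where
  "mid i = (e1 $ i + e2 $ i) / 2"

definition q :: "'v \<Rightarrow> real" where
  "q i = (e1 $ i - e2 $ i) / (e1 $ i + e2 $ i)"

definition cs :: "real list" where
  "cs = rev (sorted_list_of_set (q ` sources E))"

definition seg_point :: "real \<Rightarrow> real^'v" where
  "seg_point u = (\<chi> i. if i \<in> sources E then mid i * (1 + q i * u) else 0)"

lemma endpoints_in_Pclos: "e1 \<in> Pclos E k y" "e2 \<in> Pclos E k y"
  using segment by auto

lemmas endpoints = endpoints_in_Pclos[unfolded Pclos_iff[OF loopless]]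

lemma positive_kernel_normalized:
  assumes pos: "\<forall>i\<in>sources E. \<nu> $ i > 0" and ker: "gamma_edges E k y \<nu> = 0"
  obtains \<sigma> t where "\<sigma> > 0" "0 \<le> t" "t \<le> 1"
    "\<forall>i\<in>sources E. \<nu> $ i = \<sigma> * ((1 - t) * e1 $ i + t * e2 $ i)"
proof -
  define \<sigma> where "\<sigma> = (\<Sum>i\<in>sources E. \<nu> $ i)"
  have "sources E \<noteq> {}" using endpoints(1) by auto
  then have \<sigma>: "\<sigma> > 0" unfolding \<sigma>_def using pos by (intro sum_pos) auto
  then obtain t where t: "0 \<le> t" "t \<le> 1" "(1 / \<sigma>) *\<^sub>R restrict_vec (sources E) \<nu> = (1 - t) *\<^sub>R e1 + t *\<^sub>R e2"
    using normalized_in_Pclos[OF loopless pos ker \<sigma>_def[symmetric]] segment unfolding closed_segment_def by auto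
  have "\<nu> $ i = \<sigma> * ((1 - t) * e1 $ i + t * e2 $ i)" if "i \<in> sources E" for i
    using arg_cong[OF t(3), of "\<lambda>v. v $ i"] that \<sigma> by (simp add: restrict_vec_def field_simps)
  then show thesis using that t \<sigma> by blast
qed

lemma mid_pos: "i \<in> sources E \<Longrightarrow> mid i > 0"
proof -
  assume i: "i \<in> sources E"
  obtain \<xi> where \<xi>: "\<forall>i\<in>sources E. \<xi> $ i > 0" "gamma_edges E k y \<xi> = 0" using positive_kernel by blast
  then obtain \<sigma> t where \<sigma>: "\<sigma> > 0" and t: "0 \<le> t" "t \<le> 1"
    and \<xi>i: "\<xi> $ i = \<sigma> * ((1 - t) * e1 $ i + t * e2 $ i)"
    using positive_kernel_normalized i by metis
  have "0 < \<sigma> * ((1 - t) * e1 $ i + t * e2 $ i)" using bspec[OF \<xi>(1) i] unfolding \<xi>i .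
  then have "0 < (1 - t) * e1 $ i + t * e2 $ i" using \<sigma> by (simp add: zero_less_mult_iff)
  moreover have "(1 - t) * e1 $ i \<le> e1 $ i" "t * e2 $ i \<le> e2 $ i"
    using endpoints i t by (simp_all add: algebra_simps mult_left_le_one_le)
  ultimately have "0 < e1 $ i + e2 $ i" by linarith
  then show ?thesis unfolding mid_def by simp
qed

lemma abs_q_le_one: "i \<in> sources E \<Longrightarrow> \<bar>q i\<bar> \<le> 1"
  using mid_pos[of i] endpoints unfolding q_def mid_def by (auto simp: abs_le_iff divide_le_eq le_divide_eq)

lemma segment_point_eq:
  "i \<in> sources E \<Longrightarrow> (1 - t) * e1 $ i + t * e2 $ i = mid i * (1 + q i * (1 - 2 * t))"
  using mid_pos[of i] unfolding q_def mid_def by (simp add: field_simps)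

lemma ex_q_eq_one: "\<exists>i\<in>sources E. q i = 1"
  using Pclos_endpoint_has_zero[OF loopless segment distinct] mid_pos unfolding q_def mid_def by force

lemma ex_q_eq_minus_one: "\<exists>i\<in>sources E. q i = -1"
  using Pclos_endpoint_has_zero[OF loopless segment[unfolded closed_segment_commute[of e1]] distinct[symmetric]]
    mid_pos unfolding q_def mid_def by force

lemma one_plus_q_pos: "-1 < u \<Longrightarrow> u < 1 \<Longrightarrow> i \<in> sources E \<Longrightarrow> 1 + q i * u > 0"
  using abs_q_le_one by (intro one_plus_mult_pos) auto

lemma seg_point_pos: "-1 < u \<Longrightarrow> u < 1 \<Longrightarrow> i \<in> sources E \<Longrightarrow> seg_point u $ i > 0"
  using mid_pos one_plus_q_pos unfolding seg_point_def by simp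

lemma ln_seg_point:
  assumes "-1 < u" "u < 1" "i \<in> sources E"
  shows "ln (seg_point u $ i) = ln (mid i) + ln (1 + q i * u)"
  using ln_mult_pos[OF mid_pos[OF assms(3)] one_plus_q_pos[OF assms]] assms(3) unfolding seg_point_def by simp

lemma seg_point_in_kernel: "-1 \<le> u \<Longrightarrow> u \<le> 1 \<Longrightarrow> gamma_edges E k y (seg_point u) = 0"
proof -
  assume u: "-1 \<le> u" "u \<le> 1"
  define t where "t = (1 - u) / 2"
  have "(1 - t) *\<^sub>R e1 + t *\<^sub>R e2 \<in> Pclos E k y"
    using segment u unfolding closed_segment_def t_def by auto
  moreover have "seg_point u $ i = ((1 - t) *\<^sub>R e1 + t *\<^sub>R e2) $ i" for i
  proof (cases "i \<in> sources E")
    case True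
    have "1 - 2 * t = u" unfolding t_def by (simp add: field_simps)
    then show ?thesis using segment_point_eq[OF True, of t] True unfolding seg_point_def by simp
  next
    case False
    then show ?thesis using endpoints unfolding seg_point_def supported_vecs_def by simp
  qed
  then have "seg_point u = (1 - t) *\<^sub>R e1 + t *\<^sub>R e2" by (simp add: vec_eq_iff)
  ultimately show ?thesis unfolding Pclos_iff[OF loopless] by simp
qed

lemma positive_kernel_on_segment:
  assumes pos: "\<forall>i\<in>sources E. \<nu> $ i > 0" and ker: "gamma_edges E k y \<nu> = 0"
  obtains \<sigma> u where "\<sigma> > 0" "-1 < u" "u < 1" "\<forall>i\<in>sources E. \<nu> $ i = \<sigma> * seg_point u $ i"
proof -
  obtain \<sigma> t where \<sigma>: "\<sigma> > 0" and t: "0 \<le> t" "t \<le> 1"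
    and \<nu>: "\<forall>i\<in>sources E. \<nu> $ i = \<sigma> * ((1 - t) * e1 $ i + t * e2 $ i)"
    using positive_kernel_normalized[OF pos ker] by blast
  have \<nu>': "\<forall>i\<in>sources E. \<nu> $ i = \<sigma> * seg_point (1 - 2 * t) $ i"
    using \<nu> segment_point_eq unfolding seg_point_def by simp
  have "1 + q i * (1 - 2 * t) > 0" if i: "i \<in> sources E" for i
  proof -
    have "0 < \<sigma> * (mid i * (1 + q i * (1 - 2 * t)))"
      using \<nu>' pos i unfolding seg_point_def by simp
    then show ?thesis using \<sigma> mid_pos[OF i] by (simp add: zero_less_mult_iff)
  qed
  then have "-1 < 1 - 2 * t" "1 - 2 * t < 1"
    using ex_q_eq_one ex_q_eq_minus_one by force+
  then show thesis using that \<nu>' \<sigma> by blast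
qed

lemma cs_sorted: "sorted_wrt (>) cs" and set_cs: "set cs = q ` sources E"
  unfolding cs_def sorted_wrt_rev using strict_sorted_list_of_set[of "q ` sources E"] by simp_all

lemma length_cs: "length cs \<ge> 2"
proof -
  have "{1, -1} \<subseteq> set cs" using set_cs ex_q_eq_one ex_q_eq_minus_one by force
  then have "card {1, -1::real} \<le> card (set cs)" by (intro card_mono) auto
  then show ?thesis using card_length[of cs] by simp
qed

lemma cs_first: "cs!0 = 1" and cs_last: "cs!(length cs - 1) = -1"
proof -
  have bounds: "\<bar>c\<bar> \<le> 1" if "c \<in> set cs" for c using that set_cs abs_q_le_one by auto
  have n: "0 < length cs" "length cs - 1 < length cs" using length_cs by linarith+
  obtain r where r: "r < length cs" "cs!r = 1" using set_cs ex_q_eq_one by (metis imageI in_set_conv_nth)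
  then have "cs!r \<le> cs!0" using sorted_wrt_greater_nth_le_iff[OF cs_sorted r(1) n(1)] by simp
  then show "cs!0 = 1" using bounds[OF nth_mem[OF n(1)]] r by simp
  obtain r' where r': "r' < length cs" "cs!r' = -1" using set_cs ex_q_eq_minus_one by (metis imageI in_set_conv_nth)
  then have "cs!(length cs - 1) \<le> cs!r'" using sorted_wrt_greater_nth_le_iff[OF cs_sorted n(2) r'(1)] by simp
  then show "cs!(length cs - 1) = -1" using bounds[OF nth_mem[OF n(2)]] r' by simp
qed

definition level_weight :: "real^'v \<Rightarrow> nat \<Rightarrow> real" where
  "level_weight b m = (\<Sum>i\<in>{i\<in>sources E. q i = cs!(m-1)}. b $ i)"

definition upper_weight :: "real^'v \<Rightarrow> nat \<Rightarrow> real" where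
  "upper_weight b p = (\<Sum>i\<in>sources E. if q i \<ge> cs!p then b $ i else 0)"

lemma upper_weight_eq_sum_level_weight:
  "p < length cs \<Longrightarrow> upper_weight b p = (\<Sum>m=1..p+1. level_weight b m)"
  using sum_level_sets_prefix[OF finite cs_sorted set_cs[symmetric], of p "\<lambda>i. b $ i"]
  unfolding upper_weight_def level_weight_def by simp

lemma upper_weight_penultimate:
  assumes b: "(\<Sum>i\<in>sources E. b $ i) = 0"
  shows "upper_weight b (length cs - 2) = - level_weight b (length cs)"
proof -
  let ?n = "length cs"
  have n: "?n - 1 < ?n" "?n - 1 + 1 = ?n" "?n - 2 + 1 = ?n - 1" "?n - 2 < ?n" "?n = Suc (?n - 1)"
    using length_cs by auto
  have "upper_weight b (?n - 1) = (\<Sum>i\<in>sources E. b $ i)"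
    unfolding upper_weight_def using cs_last abs_q_le_one by (intro sum.cong refl) (simp add: abs_le_iff)
  then have "(\<Sum>m=1..?n. level_weight b m) = 0"
    using upper_weight_eq_sum_level_weight[OF n(1), unfolded n(2)] b by simp
  moreover have "(\<Sum>m=1..Suc (?n-1). level_weight b m)
      = (\<Sum>m=1..?n-1. level_weight b m) + level_weight b (Suc (?n-1))"
    by simp
  then have "(\<Sum>m=1..?n. level_weight b m) = (\<Sum>m=1..?n-1. level_weight b m) + level_weight b ?n"
    by (simp only: n(5)[symmetric])
  ultimately have "(\<Sum>m=1..?n-1. level_weight b m) = - level_weight b ?n" by linarith
  then show ?thesis
    using upper_weight_eq_sum_level_weight[OF n(4), unfolded n(3)] by simp
qed

text \<open>The sign \<open>sg\<close> turns the alternative in (III) into nonnegativity of all upper weights.\<close>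

lemma log_ratio_weights_of_sign_condition:
  assumes b: "(\<Sum>i\<in>sources E. b $ i) = 0"
    and partial: "(\<forall>m\<in>{1..<length cs}. (\<Sum>m'=1..m. level_weight b m') \<ge> 0)
      \<or> (\<forall>m\<in>{1..<length cs}. (\<Sum>m'=1..m. level_weight b m') \<le> 0)"
    and ends: "level_weight b 1 * level_weight b (length cs) < 0"
  obtains sg where "sg \<noteq> 0" "log_ratio_weights cs (\<lambda>p. sg * upper_weight b p)"
proof -
  let ?n = "length cs"
  define sg where "sg = (if \<forall>m\<in>{1..<?n}. (\<Sum>m'=1..m. level_weight b m') \<ge> 0 then 1 else (-1::real))"
  have sg: "sg = 1 \<or> sg = -1" unfolding sg_def by simp
  have nonneg: "sg * upper_weight b p \<ge> 0" if "p < ?n - 1" for p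
  proof -
    have p1: "p + 1 \<in> {1..<?n}" and p: "p < ?n" using that by auto
    show ?thesis
    proof (cases "\<forall>m\<in>{1..<?n}. (\<Sum>m'=1..m. level_weight b m') \<ge> 0")
      case True
      moreover have "sg = 1" using True unfolding sg_def by argo
      ultimately show ?thesis using upper_weight_eq_sum_level_weight[OF p] bspec[OF True p1] by simp
    next
      case False
      then have "(\<Sum>m'=1..p+1. level_weight b m') \<le> 0" using partial p1 by blast
      moreover have "sg = -1" using False unfolding sg_def by argo
      ultimately show ?thesis using upper_weight_eq_sum_level_weight[OF p] by simp
    qed
  qed
  have "0 < ?n" using length_cs by linarith
  then have first: "upper_weight b 0 = level_weight b 1"
    using upper_weight_eq_sum_level_weight[of 0 b] by simp
  define a c where "a = sg * level_weight b 1" and "c = sg * level_weight b ?n"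
  have "a * c = level_weight b 1 * level_weight b ?n" using sg unfolding a_def c_def by auto
  then have "a * c < 0" using ends by simp
  moreover have "a \<ge> 0" using nonneg[of 0] length_cs first unfolding a_def by simp
  ultimately have "a > 0" "c < 0" by (auto simp: mult_less_0_iff)
  then have "sg * upper_weight b 0 > 0" "sg * upper_weight b (?n - 2) > 0"
    using first upper_weight_penultimate[OF b] unfolding a_def c_def by simp_all
  then have "log_ratio_weights cs (\<lambda>p. sg * upper_weight b p)"
    by (intro log_ratio_weights.intro cs_sorted length_cs cs_first cs_last nonneg)
  moreover have "sg \<noteq> 0" using sg by auto
  ultimately show thesis using that by blast
qed

lemma sum_ln_on_segment:
  assumes b: "(\<Sum>i\<in>sources E. b i) = 0" and \<sigma>: "\<sigma> > 0" and u: "-1 < u" "u < 1"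
    and \<nu>: "\<forall>i\<in>sources E. \<nu> $ i = \<sigma> * seg_point u $ i"
  shows "(\<Sum>i\<in>sources E. b i * ln (\<nu> $ i))
    = (\<Sum>i\<in>sources E. b i * ln (mid i)) + (\<Sum>i\<in>sources E. b i * ln (1 + q i * u))"
proof -
  have "ln (\<nu> $ i) = ln \<sigma> + (ln (mid i) + ln (1 + q i * u))" if "i \<in> sources E" for i
    using \<nu> that ln_mult_pos[OF \<sigma> seg_point_pos[OF u that]] ln_seg_point[OF u that] by simp
  then have "(\<Sum>i\<in>sources E. b i * ln (\<nu> $ i))
      = ln \<sigma> * (\<Sum>i\<in>sources E. b i) + (\<Sum>i\<in>sources E. b i * ln (mid i) + b i * ln (1 + q i * u))"
    by (simp add: sum_distrib_left sum.distrib[symmetric] algebra_simps)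
  then show ?thesis using b by (simp add: sum.distrib)
qed

lemma sum_eq_0_of_defic_kernel_span:
  "defic_kernel y E = span {b} \<Longrightarrow> (\<Sum>i\<in>sources E. b $ i) = 0"
  using span_base[of b "{b}"] unfolding defic_kernel_def by auto

lemma log_ratio_weights_H_eq:
  assumes b: "(\<Sum>i\<in>sources E. b $ i) = 0" and weights: "log_ratio_weights cs (\<lambda>p. sg * upper_weight b p)"
  shows "log_ratio_weights.H cs (\<lambda>p. sg * upper_weight b p) u
    = sg * (\<Sum>i\<in>sources E. b $ i * ln (1 + q i * u))"
proof -
  interpret W: log_ratio_weights cs "\<lambda>p. sg * upper_weight b p" by (rule weights)
  have "W.H u = sg * (\<Sum>p<length cs - 1. upper_weight b p * log_ratio cs p u)"
    unfolding W.H_def by (simp add: sum_distrib_left mult.assoc)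
  also have "\<dots> = sg * (\<Sum>i\<in>sources E. b $ i * ln (1 + q i * u))"
    using sum_level_sets_telescope[OF finite cs_sorted set_cs[symmetric], of "\<lambda>i. b $ i" "\<lambda>c. ln (1 + c * u)"] b
    unfolding upper_weight_def log_ratio_def by simp
  finally show ?thesis .
qed

text \<open>On the segment, \<open>ln\<close>-balance of \<open>\<sigma> \<cdot> seg_point u\<close> reads \<open>H u = - C0\<close>, which has exactly one
  solution because \<open>H\<close> increases strictly from \<open>-\<infinity>\<close> to \<open>\<infinity>\<close>.\<close>

lemma balanced_kernel_ray_of_log_ratio_weights:
  assumes DK: "defic_kernel y E = span {b}" and sg: "sg \<noteq> 0"
    and weights: "log_ratio_weights cs (\<lambda>p. sg * upper_weight b p)"
  shows "\<exists>\<zeta>. balanced_kernel_ray E k y \<zeta>"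
proof -
  interpret W: log_ratio_weights cs "\<lambda>p. sg * upper_weight b p" by (rule weights)
  note b = sum_eq_0_of_defic_kernel_span[OF DK]
  define C0 where "C0 = sg * (\<Sum>i\<in>sources E. b $ i * ln (mid i))"
  have balanced_iff: "ln_balanced y E \<nu> \<longleftrightarrow> W.H u = - C0"
    if "\<sigma> > 0" "-1 < u" "u < 1" "\<forall>i\<in>sources E. \<nu> $ i = \<sigma> * seg_point u $ i" for \<sigma> u \<nu>
  proof -
    have "C0 + W.H u = sg * (\<Sum>i\<in>sources E. b $ i * ln (\<nu> $ i))"
      unfolding log_ratio_weights_H_eq[OF b weights] C0_def sum_ln_on_segment[of "\<lambda>i. b $ i", OF b that]
      by (simp add: algebra_simps)
    then show ?thesis unfolding ln_balanced_span_iff[OF DK] using sg by auto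
  qed
  obtain u0 where u0: "-1 < u0" "u0 < 1" "W.H u0 = - C0" using W.H_surj by blast
  show ?thesis
    unfolding balanced_kernel_ray_def
  proof (intro exI[of _ "seg_point u0"] conjI allI impI)
    show "\<forall>i\<in>sources E. 0 < seg_point u0 $ i" using seg_point_pos u0 by blast
    show "gamma_edges E k y (seg_point u0) = 0" using seg_point_in_kernel u0 by simp
    show "ln_balanced y E (seg_point u0)" using balanced_iff[of 1 u0] u0 by simp
    fix \<nu> assume \<nu>: "(\<forall>i\<in>sources E. 0 < \<nu> $ i) \<and> gamma_edges E k y \<nu> = 0 \<and> ln_balanced y E \<nu>"
    then obtain \<sigma> u where \<sigma>u: "\<sigma> > 0" "-1 < u" "u < 1" "\<forall>i\<in>sources E. \<nu> $ i = \<sigma> * seg_point u $ i"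
      using positive_kernel_on_segment by metis
    then have "W.H u = W.H u0" using balanced_iff \<nu> u0 by simp
    have "u = u0"
    proof (rule ccontr)
      assume "u \<noteq> u0"
      then consider "u < u0" | "u0 < u" by linarith
      then show False using W.H_strict_mono \<sigma>u u0 \<open>W.H u = W.H u0\<close> by cases fastforce+
    qed
    then show "\<exists>c>0. \<forall>i\<in>sources E. \<nu> $ i = c * seg_point u0 $ i" using \<sigma>u by blast
  qed
qed

end

lemma exists_balanced_kernel_ray_of_sign_cond:
  fixes E :: "('v::finite \<times> 'v) set" and y :: "'v \<Rightarrow> real^'n"
  assumes loopless: "\<forall>(i, i')\<in>E. i \<noteq> i'"
    and \<xi>: "\<forall>i\<in>sources E. \<xi> $ i > 0" "gamma_edges E k y \<xi> = 0" and sc: "sign_cond E k y"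
  shows "\<exists>\<zeta>. balanced_kernel_ray E k y \<zeta>"
proof -
  obtain e1 e2 b where seg: "Pclos E k y = closed_segment e1 e2" and ne: "e1 \<noteq> e2"
    and DK: "defic_kernel y E = span {b}"
    and cond: "let q = (\<lambda>i. (e1 $ i - e2 $ i) / (e1 $ i + e2 $ i));
            cs = rev (sorted_list_of_set (q ` sources E));
            \<omega> = length cs;
            tb = (\<lambda>m. \<Sum>i \<in> {i \<in> sources E. q i = cs ! (m - 1)}. b $ i)
        in ((\<forall>i \<in> {1..<\<omega>}. (\<Sum>m = 1..i. tb m) \<ge> 0) \<or> (\<forall>i \<in> {1..<\<omega>}. (\<Sum>m = 1..i. tb m) \<le> 0))
           \<and> tb 1 * tb \<omega> < 0"
    using sc unfolding sign_cond_def by blast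
  interpret Pclos_segment E k y e1 e2
    using loopless seg ne \<xi> by unfold_locales blast+
  have "q = (\<lambda>i. (e1 $ i - e2 $ i) / (e1 $ i + e2 $ i))" by (simp add: q_def[abs_def])
  then have "((\<forall>m\<in>{1..<length cs}. (\<Sum>m'=1..m. level_weight b m') \<ge> 0)
      \<or> (\<forall>m\<in>{1..<length cs}. (\<Sum>m'=1..m. level_weight b m') \<le> 0))
      \<and> level_weight b 1 * level_weight b (length cs) < 0"
    using cond unfolding Let_def level_weight_def cs_def by simp
  then obtain sg where "sg \<noteq> 0" "log_ratio_weights cs (\<lambda>p. sg * upper_weight b p)"
    using log_ratio_weights_of_sign_condition[OF sum_eq_0_of_defic_kernel_span[OF DK]] by blast
  then show ?thesis using balanced_kernel_ray_of_log_ratio_weights[OF DK] by blast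
qed

section \<open>Equilibria of the whole network\<close>

lemma exists_balanced_kernel_ray:
  fixes E :: "('v::finite \<times> 'v) set" and y :: "'v \<Rightarrow> real^'n"
  assumes loopless: "\<forall>(i, i')\<in>E. i \<noteq> i'" and ne: "E \<noteq> {}"
    and K: "kin_space (verts E) E k y = L_space y E"
    and defic: "defic y E \<le> 1" "defic y E = 1 \<longrightarrow> sign_cond E k y"
    and \<xi>: "\<forall>i\<in>sources E. \<xi> $ i > 0" "gamma_edges E k y \<xi> = 0"
  shows "\<exists>\<zeta>. balanced_kernel_ray E k y \<zeta>"
proof (cases "defic y E = 0")
  case True
  obtain i0 where i0: "i0 \<in> sources E" using ne unfolding sources_def by auto
  have "defic_kernel y E \<subseteq> {0}" using True unfolding defic_def by simp
  then have "ln_balanced y E \<nu>" for \<nu> unfolding ln_balanced_def by auto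
  then have "balanced_kernel_ray E k y \<xi>"
    unfolding balanced_kernel_ray_def
    using \<xi> positive_kernel_ray_of_defic_zero[OF loopless i0 K True \<xi>] by blast
  then show ?thesis by blast
next
  case False
  then show ?thesis using defic exists_balanced_kernel_ray_of_sign_cond[OF loopless \<xi>] by simp
qed

lemma ln_balanced_monomials:
  assumes "positive_vec x"
  shows "ln_balanced y E (monomials y x)"
  unfolding ln_balanced_def
proof
  fix \<beta> assume "\<beta> \<in> defic_kernel y E"
  then have "(\<Sum>i\<in>sources E. \<beta> $ i *\<^sub>R y i) \<bullet> ln_vec x = 0" unfolding defic_kernel_def by simp
  then show "(\<Sum>i\<in>sources E. \<beta> $ i * ln (monomials y x $ i)) = 0"
    unfolding monomials_def by (simp add: ln_monom[OF assms] inner_sum_left)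
qed

lemma monomials_ray_iff_log_differences:
  fixes y :: "'v::finite \<Rightarrow> real^'n" and \<zeta> :: "real^'v"
  assumes x: "positive_vec x" and S: "S \<noteq> {}" and \<zeta>: "\<forall>i\<in>S. \<zeta> $ i > 0"
  shows "(\<exists>c>0. \<forall>i\<in>S. monom x (y i) = c * \<zeta> $ i)
    \<longleftrightarrow> (\<forall>i\<in>S. \<forall>i'\<in>S. (y i - y i') \<bullet> ln_vec x = ln (\<zeta> $ i) - ln (\<zeta> $ i'))"
proof
  assume "\<exists>c>0. \<forall>i\<in>S. monom x (y i) = c * \<zeta> $ i"
  then obtain c where c: "c > 0" "\<forall>i\<in>S. monom x (y i) = c * \<zeta> $ i" by blast
  have "y i \<bullet> ln_vec x = ln c + ln (\<zeta> $ i)" if "i \<in> S" for i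
    using ln_monom[OF x, of "y i"] c that \<zeta> by (simp add: ln_mult_pos)
  then show "\<forall>i\<in>S. \<forall>i'\<in>S. (y i - y i') \<bullet> ln_vec x = ln (\<zeta> $ i) - ln (\<zeta> $ i')"
    by (simp add: inner_diff_left)
next
  assume diff: "\<forall>i\<in>S. \<forall>i'\<in>S. (y i - y i') \<bullet> ln_vec x = ln (\<zeta> $ i) - ln (\<zeta> $ i')"
  obtain i0 where i0: "i0 \<in> S" using S by auto
  define c where "c = monom x (y i0) / \<zeta> $ i0"
  have c: "c > 0" unfolding c_def using monom_pos[OF x] \<zeta> i0 by simp
  have "ln (monom x (y i)) = ln (c * \<zeta> $ i)" if i: "i \<in> S" for i
  proof -
    have "ln (monom x (y i)) - ln (monom x (y i0)) = ln (\<zeta> $ i) - ln (\<zeta> $ i0)"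
      using diff i i0 ln_monom[OF x] by (simp add: inner_diff_left)
    moreover have "ln (c * \<zeta> $ i) = ln (monom x (y i0)) - ln (\<zeta> $ i0) + ln (\<zeta> $ i)"
      using ln_mult_pos[OF c, of "\<zeta> $ i"] monom_pos[OF x, of "y i0"] bspec[OF \<zeta> i] bspec[OF \<zeta> i0]
      unfolding c_def by (simp add: ln_div)
    ultimately show ?thesis by simp
  qed
  then have "monom x (y i) = c * \<zeta> $ i" if "i \<in> S" for i
    using that monom_pos[OF x] \<zeta> c by (simp add: ln_inj_iff)
  then show "\<exists>c>0. \<forall>i\<in>S. monom x (y i) = c * \<zeta> $ i" using c by blast
qed

lemma gamma_edges_monomials_eq_0_iff:
  fixes y :: "'v::finite \<Rightarrow> real^'n"
  assumes ray: "balanced_kernel_ray E k y \<zeta>" and x: "positive_vec x" and ne: "sources E \<noteq> {}"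
  shows "gamma_edges E k y (monomials y x) = 0
    \<longleftrightarrow> (\<forall>i\<in>sources E. \<forall>i'\<in>sources E. (y i - y i') \<bullet> ln_vec x = ln (\<zeta> $ i) - ln (\<zeta> $ i'))"
proof -
  have \<zeta>: "\<forall>i\<in>sources E. \<zeta> $ i > 0" "gamma_edges E k y \<zeta> = 0" using ray unfolding balanced_kernel_ray_def by auto
  have "gamma_edges E k y (monomials y x) = 0 \<longleftrightarrow> (\<exists>c>0. \<forall>i\<in>sources E. monom x (y i) = c * \<zeta> $ i)"
  proof
    assume "gamma_edges E k y (monomials y x) = 0"
    then have "(\<forall>i\<in>sources E. 0 < monomials y x $ i) \<and> gamma_edges E k y (monomials y x) = 0
        \<and> ln_balanced y E (monomials y x)"
      using ln_balanced_monomials[OF x] monom_pos[OF x] by (simp add: monomials_def)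
    then obtain c where "c > 0" "\<forall>i\<in>sources E. monomials y x $ i = c * \<zeta> $ i"
      using ray unfolding balanced_kernel_ray_def by blast
    then show "\<exists>c>0. \<forall>i\<in>sources E. monom x (y i) = c * \<zeta> $ i" by (auto simp: monomials_def)
  next
    assume "\<exists>c>0. \<forall>i\<in>sources E. monom x (y i) = c * \<zeta> $ i"
    then obtain c where "\<forall>i\<in>sources E. monomials y x $ i = c * \<zeta> $ i" unfolding monomials_def by auto
    then show "gamma_edges E k y (monomials y x) = 0"
      using gamma_edges_cong_sources \<zeta>(2) by (metis scaleR_zero_right)
  qed
  then show ?thesis using monomials_ray_iff_log_differences[OF x ne \<zeta>(1)] by simp
qed

text \<open>Fredholm alternative for the system \<open>(y i - y i') \<bullet> a = ln (\<zeta> j $ i) - ln (\<zeta> j $ i')\<close>.\<close>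

lemma exists_log_potential:
  fixes y :: "'v::finite \<Rightarrow> real^'n" and \<zeta> :: "nat \<Rightarrow> real^'v" and src :: "nat \<Rightarrow> 'v set"
  assumes relations: "\<And>\<gamma>. \<forall>j<l. \<gamma> j \<in> supported_vecs (src j) \<and> (\<Sum>i\<in>src j. \<gamma> j $ i) = 0 \<Longrightarrow>
      (\<Sum>j<l. \<Sum>i\<in>src j. \<gamma> j $ i *\<^sub>R y i) = 0 \<Longrightarrow> (\<Sum>j<l. \<Sum>i\<in>src j. \<gamma> j $ i * ln (\<zeta> j $ i)) = 0"
  obtains a where "\<And>j i i'. j < l \<Longrightarrow> i \<in> src j \<Longrightarrow> i' \<in> src j \<Longrightarrow>
      (y i - y i') \<bullet> a = ln (\<zeta> j $ i) - ln (\<zeta> j $ i')"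
proof -
  define D where "D = {\<gamma>. \<forall>j<l. \<gamma> j \<in> supported_vecs (src j) \<and> (\<Sum>i\<in>src j. \<gamma> j $ i) = 0}"
  define M where "M \<gamma> = (\<Sum>j<l. \<Sum>i\<in>src j. \<gamma> j $ i *\<^sub>R y i)" for \<gamma>
  define \<Phi> where "\<Phi> \<gamma> = (\<Sum>j<l. \<Sum>i\<in>src j. \<gamma> j $ i * ln (\<zeta> j $ i))" for \<gamma>
  have closed: "(\<lambda>j. g j + h j) \<in> D" "(\<lambda>j. g j - h j) \<in> D" "(\<lambda>j. c *\<^sub>R g j) \<in> D"
    if "g \<in> D" "h \<in> D" for g h c
    using that unfolding D_def supported_vecs_def
    by (auto simp: sum.distrib sum_subtractf sum_distrib_left[symmetric])
  have linear: "M (\<lambda>j. g j + h j) = M g + M h" "M (\<lambda>j. g j - h j) = M g - M h" "M (\<lambda>j. c *\<^sub>R g j) = c *\<^sub>R M g"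
    "\<Phi> (\<lambda>j. g j + h j) = \<Phi> g + \<Phi> h" "\<Phi> (\<lambda>j. g j - h j) = \<Phi> g - \<Phi> h" "\<Phi> (\<lambda>j. c *\<^sub>R g j) = c * \<Phi> g"
    for g h c
    unfolding M_def \<Phi>_def
    by (simp_all add: algebra_simps sum.distrib sum_subtractf scaleR_sum_right sum_distrib_left)
  obtain a where a: "\<And>\<gamma>. \<gamma> \<in> D \<Longrightarrow> a \<bullet> M \<gamma> = \<Phi> \<gamma>"
  proof (rule factored_functional_inner_representation[of "\<lambda>j. 0" D M \<Phi>])
    show "(\<lambda>j. 0) \<in> D" unfolding D_def supported_vecs_def by simp
    show "\<Phi> g = \<Phi> h" if "g \<in> D" "h \<in> D" "M g = M h" for g h
      using relations[of "\<lambda>j. g j - h j"] closed(2)[OF that(1,2)] that(3) linear(2,5)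
      unfolding D_def M_def \<Phi>_def by auto
    show "\<exists>s\<in>D. M s = M g + M h \<and> \<Phi> s = \<Phi> g + \<Phi> h" if "g \<in> D" "h \<in> D" for g h
      using closed(1)[OF that] linear(1,4) by blast
    show "\<exists>s\<in>D. M s = c *\<^sub>R M g \<and> \<Phi> s = c * \<Phi> g" if "g \<in> D" for c g
      using closed(3)[OF that that] linear(3,6) by blast
  qed blast
  show thesis
  proof (rule that)
    fix j i i' assume j: "j < l" and i: "i \<in> src j" "i' \<in> src j"
    define \<gamma> where "\<gamma> j' = (if j' = j then axis i 1 - axis i' 1 else 0 :: real^'v)" for j'
    have "\<gamma> \<in> D"
      using i sum_axis_diff[OF i] unfolding D_def \<gamma>_def supported_vecs_def by (auto simp: axis_def)
    moreover have "M \<gamma> = (\<Sum>j'<l. if j' = j then y i - y i' else 0)"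
      unfolding M_def \<gamma>_def using sum_axis_diff_scaleR[OF i, of y] by (intro sum.cong) auto
    moreover have "\<Phi> \<gamma> = (\<Sum>j'<l. if j' = j then ln (\<zeta> j $ i) - ln (\<zeta> j $ i') else 0)"
      unfolding \<Phi>_def \<gamma>_def using sum_axis_diff_scaleR[OF i, of "\<lambda>i. ln (\<zeta> j $ i)"]
      by (intro sum.cong) auto
    ultimately show "(y i - y i') \<bullet> a = ln (\<zeta> j $ i) - ln (\<zeta> j $ i')"
      using a[of \<gamma>] j by (simp add: inner_commute)
  qed
qed

lemma independent_subnets_sum_eq_0:
  assumes "independent_subnets l Ss S" "\<forall>j<l. v j \<in> Ss j" "(\<Sum>j<l. v j) = 0"
  shows "\<forall>j<l. v j = 0"
  using assms unfolding independent_subnets_def by blast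

lemma orthogonal_span_L_spaces_iff:
  "(\<forall>v\<in>span (\<Union>j<l. L_space y (Es j)). w \<bullet> v = 0)
    \<longleftrightarrow> (\<forall>j<l. \<forall>i\<in>sources (Es j). \<forall>i'\<in>sources (Es j). (y i - y i') \<bullet> w = 0)"
proof
  assume "\<forall>v\<in>span (\<Union>j<l. L_space y (Es j)). w \<bullet> v = 0"
  moreover have "y i - y i' \<in> span (\<Union>j<l. L_space y (Es j))"
    if "j < l" "i \<in> sources (Es j)" "i' \<in> sources (Es j)" for j i i'
    using that unfolding L_space_def by (blast intro: span_base)
  ultimately show "\<forall>j<l. \<forall>i\<in>sources (Es j). \<forall>i'\<in>sources (Es j). (y i - y i') \<bullet> w = 0"
    by (auto simp: inner_commute)
next
  assume orth: "\<forall>j<l. \<forall>i\<in>sources (Es j). \<forall>i'\<in>sources (Es j). (y i - y i') \<bullet> w = 0"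
  have sub: "subspace {v. w \<bullet> v = 0}" unfolding subspace_def by (simp add: inner_add_right)
  have "L_space y (Es j) \<subseteq> {v. w \<bullet> v = 0}" if "j < l" for j
    unfolding L_space_def using orth that sub by (intro span_minimal) (auto simp: inner_commute)
  then have "span (\<Union>j<l. L_space y (Es j)) \<subseteq> {v. w \<bullet> v = 0}"
    using sub by (intro span_minimal) auto
  then show "\<forall>v\<in>span (\<Union>j<l. L_space y (Es j)). w \<bullet> v = 0" by auto
qed

lemma ma_rhs_eq_0_iff_subnetworks:
  fixes Es :: "nat \<Rightarrow> ('v::finite \<times> 'v) set" and l :: nat
  assumes partition: "(\<Union>j<l. Es j) = E" "\<forall>j<l. \<forall>j'<l. j \<noteq> j' \<longrightarrow> Es j \<inter> Es j' = {}"
    and independent: "independent_subnets l (\<lambda>j. stoich_space y (Es j)) (stoich_space y E)"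
  shows "ma_rhs E k y x = 0 \<longleftrightarrow> (\<forall>j<l. gamma_edges (Es j) k y (monomials y x) = 0)"
  unfolding ma_rhs_eq_gamma_edges partition(1)[symmetric] gamma_edges_UN_disjoint[OF partition(2)]
  using independent_subnets_sum_eq_0[OF independent, of "\<lambda>j. gamma_edges (Es j) k y (monomials y x)"]
    gamma_edges_in_stoich_space by auto

lemma balanced_kernel_rays_respect_relations:
  fixes Es :: "nat \<Rightarrow> ('v::finite \<times> 'v) set" and y :: "'v \<Rightarrow> real^'n" and \<zeta> \<gamma> :: "nat \<Rightarrow> real^'v"
    and l :: nat
  assumes ne: "\<forall>j<l. Es j \<noteq> {}"
    and independent: "independent_subnets l (\<lambda>j. stoich_space y (Es j)) S"
    and K: "\<forall>j<l. range (gamma_edges (Es j) k y) = L_space y (Es j)"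
    and ray: "\<forall>j<l. balanced_kernel_ray (Es j) k y (\<zeta> j)"
    and \<gamma>: "\<forall>j<l. \<gamma> j \<in> supported_vecs (sources (Es j)) \<and> (\<Sum>i\<in>sources (Es j). \<gamma> j $ i) = 0"
    and rel: "(\<Sum>j<l. \<Sum>i\<in>sources (Es j). \<gamma> j $ i *\<^sub>R y i) = 0"
  shows "(\<Sum>j<l. \<Sum>i\<in>sources (Es j). \<gamma> j $ i * ln (\<zeta> j $ i)) = 0"
proof -
  have "(\<Sum>i\<in>sources (Es j). \<gamma> j $ i *\<^sub>R y i) \<in> stoich_space y (Es j)" if j: "j < l" for j
  proof -
    have "sources (Es j) \<noteq> {}" using ne j unfolding sources_def by simp
    then obtain i0 where "i0 \<in> sources (Es j)" by blast
    then have "(\<Sum>i\<in>sources (Es j). \<gamma> j $ i *\<^sub>R y i) \<in> L_space y (Es j)"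
      unfolding L_space_def using sum_scaleR_in_span_diffs[of i0 "sources (Es j)" "\<lambda>i. \<gamma> j $ i" y] \<gamma> j
      by simp
    then obtain \<nu> where "(\<Sum>i\<in>sources (Es j). \<gamma> j $ i *\<^sub>R y i) = gamma_edges (Es j) k y \<nu>"
      using K j by (metis rangeE)
    then show ?thesis using gamma_edges_in_stoich_space by metis
  qed
  then have "\<forall>j<l. (\<Sum>i\<in>sources (Es j). \<gamma> j $ i *\<^sub>R y i) = 0"
    using independent_subnets_sum_eq_0[OF independent, of "\<lambda>j. \<Sum>i\<in>sources (Es j). \<gamma> j $ i *\<^sub>R y i"] rel
    by simp
  then have "\<gamma> j \<in> defic_kernel y (Es j)" if "j < l" for j
    using \<gamma> that unfolding defic_kernel_def supported_vecs_def by auto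
  then have "(\<Sum>i\<in>sources (Es j). \<gamma> j $ i * ln (\<zeta> j $ i)) = 0" if "j < l" for j
    using ray that unfolding balanced_kernel_ray_def ln_balanced_def by blast
  then show ?thesis by simp
qed

text \<open>Independence enters twice: equilibria split into subnetwork equilibria, and the logarithmic
  differences of the kernel rays are compatible.\<close>

lemma pos_equilibrium_iff_log_orthogonal:
  fixes E :: "('v::finite \<times> 'v) set" and y :: "'v \<Rightarrow> real^'n" and Es :: "nat \<Rightarrow> ('v \<times> 'v) set"
    and l :: nat and \<zeta> :: "nat \<Rightarrow> real^'v"
  assumes partition: "(\<Union>j<l. Es j) = E" "\<forall>j<l. \<forall>j'<l. j \<noteq> j' \<longrightarrow> Es j \<inter> Es j' = {}"
    and ne: "\<forall>j<l. Es j \<noteq> {}"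
    and independent: "independent_subnets l (\<lambda>j. stoich_space y (Es j)) (stoich_space y E)"
    and K: "\<forall>j<l. range (gamma_edges (Es j) k y) = L_space y (Es j)"
    and ray: "\<forall>j<l. balanced_kernel_ray (Es j) k y (\<zeta> j)"
  obtains a where "\<And>x. pos_equilibrium E k y x
    \<longleftrightarrow> positive_vec x \<and> (\<forall>v\<in>span (\<Union>j<l. L_space y (Es j)). (ln_vec x - a) \<bullet> v = 0)"
proof -
  obtain a where a: "\<And>j i i'. j < l \<Longrightarrow> i \<in> sources (Es j) \<Longrightarrow> i' \<in> sources (Es j) \<Longrightarrow>
      (y i - y i') \<bullet> a = ln (\<zeta> j $ i) - ln (\<zeta> j $ i')"
    using exists_log_potential[where src = "\<lambda>j. sources (Es j)",
        OF balanced_kernel_rays_respect_relations[OF ne independent K ray]] by blast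
  have "pos_equilibrium E k y x
      \<longleftrightarrow> positive_vec x \<and> (\<forall>v\<in>span (\<Union>j<l. L_space y (Es j)). (ln_vec x - a) \<bullet> v = 0)" for x
  proof (cases "positive_vec x")
    case True
    have "gamma_edges (Es j) k y (monomials y x) = 0
        \<longleftrightarrow> (\<forall>i\<in>sources (Es j). \<forall>i'\<in>sources (Es j). (y i - y i') \<bullet> (ln_vec x - a) = 0)"
      if j: "j < l" for j
    proof -
      have "sources (Es j) \<noteq> {}" using ne j unfolding sources_def by simp
      then have "gamma_edges (Es j) k y (monomials y x) = 0
          \<longleftrightarrow> (\<forall>i\<in>sources (Es j). \<forall>i'\<in>sources (Es j). (y i - y i') \<bullet> ln_vec x = ln (\<zeta> j $ i) - ln (\<zeta> j $ i'))"
        by (rule gamma_edges_monomials_eq_0_iff[OF ray[rule_format, OF j] True])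
      then show ?thesis using a[OF j] by (simp add: inner_diff_right)
    qed
    then show ?thesis
      unfolding pos_equilibrium_def ma_rhs_eq_0_iff_subnetworks[OF partition independent]
        orthogonal_span_L_spaces_iff using True by blast
  qed (simp add: pos_equilibrium_def)
  then show thesis using that by blast
qed

lemma exists_balanced_kernel_rays:
  fixes Es :: "nat \<Rightarrow> ('v::finite \<times> 'v) set" and y :: "'v \<Rightarrow> real^'n" and l :: nat
  assumes loopless: "\<And>j. j < l \<Longrightarrow> \<forall>(i, i')\<in>Es j. i \<noteq> i'" and ne: "\<forall>j<l. Es j \<noteq> {}"
    and independent: "independent_subnets l (\<lambda>j. stoich_space y (Es j)) S"
    and I: "\<exists>\<xi> :: nat \<Rightarrow> real^'v. (\<forall>j<l. \<forall>i \<in> sources (Es j). \<xi> j $ i > 0) \<and>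
              (\<Sum>j<l. gam (verts (Es j)) (Es j) k y (\<xi> j)) = 0"
    and III: "\<forall>j<l. defic y (Es j) \<le> 1 \<and>
              kin_space (verts (Es j)) (Es j) k y = L_space y (Es j) \<and>
              (defic y (Es j) = 1 \<longrightarrow> sign_cond (Es j) k y)"
  obtains \<zeta> where "\<forall>j<l. balanced_kernel_ray (Es j) k y (\<zeta> j)"
proof -
  have gam: "gam (verts (Es j)) (Es j) k y = gamma_edges (Es j) k y" if "j < l" for j
    using gam_eq_gamma_edges[OF order_refl loopless[OF that]] .
  obtain \<xi> :: "nat \<Rightarrow> real^'v" where \<xi>: "\<forall>j<l. \<forall>i\<in>sources (Es j). \<xi> j $ i > 0"
    and \<xi>0: "(\<Sum>j<l. gam (verts (Es j)) (Es j) k y (\<xi> j)) = 0"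
    using I by blast
  have "(\<Sum>j<l. gam (verts (Es j)) (Es j) k y (\<xi> j)) = (\<Sum>j<l. gamma_edges (Es j) k y (\<xi> j))"
    using gam by (intro sum.cong) auto
  with \<xi>0 have "(\<Sum>j<l. gamma_edges (Es j) k y (\<xi> j)) = 0" by simp
  with gamma_edges_in_stoich_space have "\<forall>j<l. gamma_edges (Es j) k y (\<xi> j) = 0"
    by (intro independent_subnets_sum_eq_0[OF independent]) auto
  then have "\<exists>\<zeta>. balanced_kernel_ray (Es j) k y \<zeta>" if j: "j < l" for j
    using exists_balanced_kernel_ray[OF loopless[OF j], of k y "\<xi> j"] ne III \<xi> j by simp
  then show thesis using that by metis
qed

lemma unique_log_orthogonal_in_class:
  fixes L :: "(real^'n) set"
  assumes L: "subspace L" and P: "\<And>x. P x \<longleftrightarrow> positive_vec x \<and> (\<forall>v\<in>L. (ln_vec x - a) \<bullet> v = 0)"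
    and x': "positive_vec x'"
  shows "\<exists>!x. P x \<and> x - x' \<in> L"
proof -
  obtain x where x: "positive_vec x" "x - x' \<in> L" "\<forall>v\<in>L. (ln_vec x - a) \<bullet> v = 0"
    using log_orthogonal_exists[OF L x'] by blast
  show ?thesis
  proof (rule ex1I[of _ x])
    show "P x \<and> x - x' \<in> L" using x P by simp
    fix z assume z: "P z \<and> z - x' \<in> L"
    then have "z - x \<in> L" using x(2) subspace_diff[OF L, of "z - x'" "x - x'"] by simp
    then show "z = x" using log_orthogonal_unique[of z x L a] x z P by simp
  qed
qed

theorem theorem11:
  fixes V :: "'v::finite set" and E :: "('v \<times> 'v) set" and y :: "'v \<Rightarrow> real^'n"
    and k :: "'v \<times> 'v \<Rightarrow> real" and l :: nat and Es :: "nat \<Rightarrow> ('v \<times> 'v) set"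
  assumes graph: "simple_digraph V E"
    and rates: "\<forall>e \<in> E. k e > 0"
    and partition: "(\<Union>j<l. Es j) = E" "\<forall>j<l. Es j \<noteq> {}"
      "\<forall>j<l. \<forall>j'<l. j \<noteq> j' \<longrightarrow> Es j \<inter> Es j' = {}"
    and connected: "\<forall>j<l. weakly_connected (Es j)"
    and independent: "independent_subnets l (\<lambda>j. stoich_space y (Es j)) (stoich_space y E)"
    and I: "\<exists>\<xi> :: nat \<Rightarrow> real^'v. (\<forall>j<l. \<forall>i \<in> sources (Es j). \<xi> j $ i > 0) \<and>
              (\<Sum>j<l. gam (verts (Es j)) (Es j) k y (\<xi> j)) = 0"
    and III: "\<forall>j<l. defic y (Es j) \<le> 1 \<and>
              kin_space (verts (Es j)) (Es j) k y = L_space y (Es j) \<and>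
              (defic y (Es j) = 1 \<longrightarrow> sign_cond (Es j) k y)"
  shows "(kin_space V E k y = span (\<Union>j<l. L_space y (Es j)) \<longrightarrow>
            (\<forall>x'. positive_vec x' \<longrightarrow>
               (\<exists>!x. pos_equilibrium E k y x \<and> x - x' \<in> kin_space V E k y)))
       \<and> (span (\<Union>j<l. L_space y (Es j)) = stoich_space y E \<longrightarrow>
            (\<forall>x'. positive_vec x' \<longrightarrow>
               (\<exists>!x. pos_equilibrium E k y x \<and> x - x' \<in> stoich_space y E)))"
proof -
  have loopless: "\<forall>(i, i')\<in>Es j. i \<noteq> i'" if "j < l" for j
    using graph partition(1) that unfolding simple_digraph_def by blast
  obtain \<zeta> where "\<forall>j<l. balanced_kernel_ray (Es j) k y (\<zeta> j)"
    using exists_balanced_kernel_rays[OF loopless partition(2) independent I III] by blast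
  moreover have "range (gamma_edges (Es j) k y) = L_space y (Es j)" if j: "j < l" for j
    using III[rule_format, OF j] unfolding kin_space_def gam_eq_gamma_edges[OF order_refl loopless[OF j]] by blast
  ultimately obtain a where "\<And>x. pos_equilibrium E k y x
      \<longleftrightarrow> positive_vec x \<and> (\<forall>v\<in>span (\<Union>j<l. L_space y (Es j)). (ln_vec x - a) \<bullet> v = 0)"
    using pos_equilibrium_iff_log_orthogonal[OF partition(1,3) partition(2) independent] by blast
  note unique = unique_log_orthogonal_in_class[OF subspace_span this]
  show ?thesis
  proof (intro conjI impI allI)
    fix x' :: "real^'n" assume "kin_space V E k y = span (\<Union>j<l. L_space y (Es j))" "positive_vec x'"
    then show "\<exists>!x. pos_equilibrium E k y x \<and> x - x' \<in> kin_space V E k y" using unique by simp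
  next
    fix x' :: "real^'n" assume "span (\<Union>j<l. L_space y (Es j)) = stoich_space y E" "positive_vec x'"
    then show "\<exists>!x. pos_equilibrium E k y x \<and> x - x' \<in> stoich_space y E" using unique by simp
  qed
qed

end
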